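(* For any $\epsilon\in(0,1]$: $$\|\nabla u_{\epsilon,V,f}\|_{L^2(\Omega)^N}\le\frac{C_\Omega\|f\|_{L^2(\Omega)}}{\lambda\epsilon^2},\qquad\|\nabla u_{\epsilon,f}\|_{L^2(\Omega)^N}\le\frac{C_\Omega\|f\|_{L^2(\Omega)}}{\lambda\epsilon^2},$$ $$\|\nabla_{X_2}u_{V,f}\|_{L^2(\Omega)^{N-q}}\le\frac{C_{\omega_2}\|f\|_{L^2(\Omega)}}{\lambda},\qquad\|\nabla_{X_2}u_f\|_{L^2(\Omega)^{N-q}}\le\frac{C_{\omega_2}\|f\|_{L^2(\Omega)}}{\lambda},$$ $$\|\beta(u_{\epsilon,V,f})\|_{L^2(\Omega)},\ \|\beta(u_{\epsilon,f})\|_{L^2(\Omega)}\le\frac{M}{\epsilon^2}\Big(|\Omega|^{1/2}+\frac{C_\Omega^2\|f\|_{L^2(\Omega)}}{\lambda}\Big),$$ $$\|\beta(u_{V,f})\|_{L^2(\Omega)},\ \|\beta(u_f)\|_{L^2(\Omega)}\le M\Big(|\Omega|^{1/2}+\frac{C_{\omega_2}^2\|f\|_{L^2(\Omega)}}{\lambda}\Big).$$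
   Context: $\Omega=\omega_1\times\omega_2$, $\omega_1\subset\mathbb{R}^q$, $\omega_2\subset\mathbb{R}^{N-q}$ bounded open, $f\in L^2(\Omega)$. $A=(a_{ij})$ with $a_{ij}\in L^\infty(\Omega)$ and $A\xi\cdot\xi\ge\lambda|\xi|^2$ ($\lambda>0$); blocks $A_{11},A_{12},A_{21},A_{22}$; $A_\epsilon=\begin{pmatrix}\epsilon^2A_{11}&\epsilon A_{12}\\ \epsilon A_{21}&A_{22}\end{pmatrix}$. $\beta:\mathbb{R}\to\mathbb{R}$ continuous nondecreasing, $\beta(0)=0$, $|\beta(s)|\le M(1+|s|)$. $H_0^1(\Omega;\omega_2)=\{v\in L^2(\Omega):\nabla_{X_2}v\in L^2,\ v(X_1,\cdot)\in H_0^1(\omega_2)\text{ a.e. }X_1\}$. $V\subset H_0^1(\Omega)$ is a closed subspace of $H_0^1(\Omega;\omega_2)$. $u_{\epsilon,V,f}\in V$ solves $\int\beta(u_{\epsilon,V,f})\varphi+\int A_\epsilon\nabla u_{\epsilon,V,f}\cdot\nabla\varphi=\int f\varphi$ for all $\varphi\in V$; $u_{V,f}\in V$ solves $\int\beta(u_{V,f})\varphi+\int A_{22}\nabla_{X_2}u_{V,f}\cdot\nabla_{X_2}\varphi=\int f\varphi$ for all $\varphi\in V$; $u_{\epsilon,f}\in H_0^1(\Omega)$ is the analogous solution with test space $H_0^1(\Omega)$, and $u_f\in H_0^1(\Omega;\omega_2)$ is the analogous limit solution with test space $H_0^1(\Omega;\omega_2)$. $C_\Omega$ is the Poincaré constant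 of $\Omega$ and $C_{\omega_2}$ satisfies $\|v\|_{L^2(\Omega)}\le C_{\omega_2}\|\nabla_{X_2}v\|$ on $H_0^1(\Omega;\omega_2)$. *)

theory Defs
  imports "HOL-Analysis.Analysis"
begin

text \<open>Points of \<open>R^N = R^q \<times> R^(N-q)\<close> are pairs \<open>(X1, X2) :: 'a \<times> 'b\<close> with
  \<open>'a, 'b :: euclidean_space\<close>; \<open>q = DIM('a)\<close>, \<open>N - q = DIM('b)\<close>.
  Functions are genuine functions (representatives); all integrals are taken
  w.r.t. Lebesgue measure on the open set under consideration.\<close>

coinductive smooth_fun :: "('n::euclidean_space \<Rightarrow> real) \<Rightarrow> bool" where
  "(\<And>x. (\<phi> has_derivative (\<lambda>h. g x \<bullet> h)) (at x)) \<Longrightarrow>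
   (\<And>b. b \<in> Basis \<Longrightarrow> smooth_fun (\<lambda>x. g x \<bullet> b)) \<Longrightarrow> smooth_fun \<phi>"

definition test_fun :: "'n::euclidean_space set \<Rightarrow> ('n \<Rightarrow> real) \<Rightarrow> ('n \<Rightarrow> 'n) \<Rightarrow> bool" where
  "test_fun \<Omega> \<phi> g \<longleftrightarrow> smooth_fun \<phi> \<and> (\<forall>x. (\<phi> has_derivative (\<lambda>h. g x \<bullet> h)) (at x)) \<and>
     (\<exists>K. compact K \<and> K \<subseteq> \<Omega> \<and> (\<forall>x. x \<notin> K \<longrightarrow> \<phi> x = 0))"

definition L2 :: "'n::euclidean_space set \<Rightarrow> ('n \<Rightarrow> 'm::euclidean_space) \<Rightarrow> bool" where
  "L2 \<Omega> g \<longleftrightarrow> set_borel_measurable lebesgue \<Omega> g \<and>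
      set_integrable lebesgue \<Omega> (\<lambda>x. (norm (g x))\<^sup>2)"

definition L2norm :: "'n::euclidean_space set \<Rightarrow> ('n \<Rightarrow> 'm::euclidean_space) \<Rightarrow> real" where
  "L2norm \<Omega> g = sqrt (set_lebesgue_integral lebesgue \<Omega> (\<lambda>x. (norm (g x))\<^sup>2))"

definition loc_integrable :: "'n::euclidean_space set \<Rightarrow> ('n \<Rightarrow> 'm::euclidean_space) \<Rightarrow> bool" where
  "loc_integrable \<Omega> g \<longleftrightarrow> (\<forall>K. compact K \<and> K \<subseteq> \<Omega> \<longrightarrow> set_integrable lebesgue K g)"

definition is_weak_grad :: "'n::euclidean_space set \<Rightarrow> ('n \<Rightarrow> real) \<Rightarrow> ('n \<Rightarrow> 'n) \<Rightarrow> bool" where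
  "is_weak_grad \<Omega> u G \<longleftrightarrow> loc_integrable \<Omega> u \<and> loc_integrable \<Omega> G \<and>
     (\<forall>\<phi> g. test_fun \<Omega> \<phi> g \<longrightarrow>
        set_lebesgue_integral lebesgue \<Omega> (\<lambda>x. u x *\<^sub>R g x)
          = - set_lebesgue_integral lebesgue \<Omega> (\<lambda>x. \<phi> x *\<^sub>R G x))"

definition is_weak_grad2 :: "('a::euclidean_space \<times> 'b::euclidean_space) set \<Rightarrow>
    ('a \<times> 'b \<Rightarrow> real) \<Rightarrow> ('a \<times> 'b \<Rightarrow> 'b) \<Rightarrow> bool" where
  "is_weak_grad2 \<Omega> u G \<longleftrightarrow> loc_integrable \<Omega> u \<and> loc_integrable \<Omega> G \<and>
     (\<forall>\<phi> g. test_fun \<Omega> \<phi> g \<longrightarrow>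
        set_lebesgue_integral lebesgue \<Omega> (\<lambda>x. u x *\<^sub>R snd (g x))
          = - set_lebesgue_integral lebesgue \<Omega> (\<lambda>x. \<phi> x *\<^sub>R G x))"

text \<open>The (a.e. unique) weak gradients, chosen by Hilbert choice.\<close>
definition wgrad :: "'n::euclidean_space set \<Rightarrow> ('n \<Rightarrow> real) \<Rightarrow> 'n \<Rightarrow> 'n" where
  "wgrad \<Omega> u = (SOME G. is_weak_grad \<Omega> u G)"

definition wgrad2 :: "('a::euclidean_space \<times> 'b::euclidean_space) set \<Rightarrow>
    ('a \<times> 'b \<Rightarrow> real) \<Rightarrow> 'a \<times> 'b \<Rightarrow> 'b" where
  "wgrad2 \<Omega> u = (SOME G. is_weak_grad2 \<Omega> u G)"

text \<open>\<open>H_0^1(\<Omega>)\<close>: closure of \<open>C_c^\<infinity>(\<Omega>)\<close> in the \<open>H^1(\<Omega>)\<close> norm.\<close>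
definition H01 :: "'n::euclidean_space set \<Rightarrow> ('n \<Rightarrow> real) \<Rightarrow> bool" where
  "H01 \<Omega> u \<longleftrightarrow> L2 \<Omega> u \<and>
     (\<exists>G. is_weak_grad \<Omega> u G \<and> L2 \<Omega> G \<and>
        (\<exists>\<phi>s gs. (\<forall>n. test_fun \<Omega> (\<phi>s n) (gs n)) \<and>
           (\<lambda>n. L2norm \<Omega> (\<lambda>x. \<phi>s n x - u x)) \<longlonglongrightarrow> 0 \<and>
           (\<lambda>n. L2norm \<Omega> (\<lambda>x. gs n x - G x)) \<longlonglongrightarrow> 0))"

definition H01_X2 :: "'a::euclidean_space set \<Rightarrow> 'b::euclidean_space set \<Rightarrow> ('a \<times> 'b \<Rightarrow> real) \<Rightarrow> bool" where
  "H01_X2 \<omega>1 \<omega>2 v \<longleftrightarrow> L2 (\<omega>1 \<times> \<omega>2) v \<and>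
     (\<exists>G. is_weak_grad2 (\<omega>1 \<times> \<omega>2) v G \<and> L2 (\<omega>1 \<times> \<omega>2) G) \<and>
     (AE X1 in lebesgue. X1 \<in> \<omega>1 \<longrightarrow> H01 \<omega>2 (\<lambda>X2. v (X1, X2)))"

text \<open>The matrix field \<open>A(x)\<close> is a linear map on \<open>'a \<times> 'b\<close>. With \<open>D_\<epsilon>(\<xi>1,\<xi>2) = (\<epsilon>\<xi>1,\<xi>2)\<close>,
  \<open>A_\<epsilon> = D_\<epsilon> A D_\<epsilon>\<close> is exactly the block matrix
  \<open>[[\<epsilon>^2 A11, \<epsilon> A12], [\<epsilon> A21, A22]]\<close>.\<close>
definition Dscale :: "real \<Rightarrow> 'a::euclidean_space \<times> 'b::euclidean_space \<Rightarrow> 'a \<times> 'b" where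
  "Dscale \<epsilon> \<xi> = (\<epsilon> *\<^sub>R fst \<xi>, snd \<xi>)"

definition A_eps :: "real \<Rightarrow> ('a::euclidean_space \<times> 'b::euclidean_space \<Rightarrow> 'a \<times> 'b \<Rightarrow> 'a \<times> 'b)
    \<Rightarrow> 'a \<times> 'b \<Rightarrow> 'a \<times> 'b \<Rightarrow> 'a \<times> 'b" where
  "A_eps \<epsilon> A x \<xi> = Dscale \<epsilon> (A x (Dscale \<epsilon> \<xi>))"

definition A22 :: "('a::euclidean_space \<times> 'b::euclidean_space \<Rightarrow> 'a \<times> 'b \<Rightarrow> 'a \<times> 'b)
    \<Rightarrow> 'a \<times> 'b \<Rightarrow> 'b \<Rightarrow> 'b" where
  "A22 A x \<eta> = snd (A x (0, \<eta>))"

definition sol_eps :: "'a::euclidean_space set \<Rightarrow> 'b::euclidean_space set \<Rightarrow> (real \<Rightarrow> real) \<Rightarrow>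
    ('a \<times> 'b \<Rightarrow> 'a \<times> 'b \<Rightarrow> 'a \<times> 'b) \<Rightarrow> real \<Rightarrow> ('a \<times> 'b \<Rightarrow> real) set \<Rightarrow>
    ('a \<times> 'b \<Rightarrow> real) \<Rightarrow> ('a \<times> 'b \<Rightarrow> real) \<Rightarrow> bool" where
  "sol_eps \<omega>1 \<omega>2 \<beta> A \<epsilon> W f u \<longleftrightarrow> u \<in> W \<and>
     (\<forall>\<phi>\<in>W. set_lebesgue_integral lebesgue (\<omega>1 \<times> \<omega>2) (\<lambda>x. \<beta> (u x) * \<phi> x)
        + set_lebesgue_integral lebesgue (\<omega>1 \<times> \<omega>2)
            (\<lambda>x. A_eps \<epsilon> A x (wgrad (\<omega>1 \<times> \<omega>2) u x) \<bullet> wgrad (\<omega>1 \<times> \<omega>2) \<phi> x)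
        = set_lebesgue_integral lebesgue (\<omega>1 \<times> \<omega>2) (\<lambda>x. f x * \<phi> x))"

definition sol_lim :: "'a::euclidean_space set \<Rightarrow> 'b::euclidean_space set \<Rightarrow> (real \<Rightarrow> real) \<Rightarrow>
    ('a \<times> 'b \<Rightarrow> 'a \<times> 'b \<Rightarrow> 'a \<times> 'b) \<Rightarrow> ('a \<times> 'b \<Rightarrow> real) set \<Rightarrow>
    ('a \<times> 'b \<Rightarrow> real) \<Rightarrow> ('a \<times> 'b \<Rightarrow> real) \<Rightarrow> bool" where
  "sol_lim \<omega>1 \<omega>2 \<beta> A W f u \<longleftrightarrow> u \<in> W \<and>
     (\<forall>\<phi>\<in>W. set_lebesgue_integral lebesgue (\<omega>1 \<times> \<omega>2) (\<lambda>x. \<beta> (u x) * \<phi> x)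
        + set_lebesgue_integral lebesgue (\<omega>1 \<times> \<omega>2)
            (\<lambda>x. A22 A x (wgrad2 (\<omega>1 \<times> \<omega>2) u x) \<bullet> wgrad2 (\<omega>1 \<times> \<omega>2) \<phi> x)
        = set_lebesgue_integral lebesgue (\<omega>1 \<times> \<omega>2) (\<lambda>x. f x * \<phi> x))"

text \<open>\<open>V\<close> is a closed linear subspace of \<open>H_0^1(\<Omega>;\<omega>2)\<close> (closedness modulo a.e. equality
  on \<open>\<Omega>\<close>, norm \<open>\<parallel>v\<parallel>_{L^2} + \<parallel>\<nabla>_{X2} v\<parallel>_{L^2}\<close>) contained in \<open>H_0^1(\<Omega>)\<close>.\<close>
definition admissible_V :: "'a::euclidean_space set \<Rightarrow> 'b::euclidean_space set \<Rightarrow>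
    ('a \<times> 'b \<Rightarrow> real) set \<Rightarrow> bool" where
  "admissible_V \<omega>1 \<omega>2 V \<longleftrightarrow>
     (\<forall>v\<in>V. H01 (\<omega>1 \<times> \<omega>2) v \<and> H01_X2 \<omega>1 \<omega>2 v) \<and>
     (\<lambda>x. 0) \<in> V \<and> (\<forall>v\<in>V. \<forall>w\<in>V. (\<lambda>x. v x + w x) \<in> V) \<and>
     (\<forall>c. \<forall>v\<in>V. (\<lambda>x. c * v x) \<in> V) \<and>
     (\<forall>vs v. (\<forall>n. vs n \<in> V) \<and> H01_X2 \<omega>1 \<omega>2 v \<and>
        (\<lambda>n. L2norm (\<omega>1 \<times> \<omega>2) (\<lambda>x. vs n x - v x)
             + L2norm (\<omega>1 \<times> \<omega>2) (\<lambda>x. wgrad2 (\<omega>1 \<times> \<omega>2) (vs n) x - wgrad2 (\<omega>1 \<times> \<omega>2) v x))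
          \<longlonglongrightarrow> 0
        \<longrightarrow> (\<exists>w\<in>V. AE x in lebesgue. x \<in> \<omega>1 \<times> \<omega>2 \<longrightarrow> w x = v x))"

end

theory Submission
  imports Defs
begin

text \<open>Testing each variational problem with its own solution \<open>u\<close> and using \<open>\<beta>(s) s \<ge> 0\<close>,
  ellipticity of \<open>A\<^sub>\<epsilon>\<close> (constant \<open>\<lambda>\<epsilon>\<^sup>2\<close>, as \<open>\<epsilon> \<le> 1\<close>) resp. of \<open>A\<^sub>2\<^sub>2\<close> (constant \<open>\<lambda>\<close>),
  Cauchy--Schwarz and the Poincare inequality gives
  \<open>\<lambda>\<epsilon>\<^sup>2 \<parallel>\<nabla>u\<parallel>\<^sup>2 \<le> \<parallel>f\<parallel> \<parallel>u\<parallel> \<le> C \<parallel>f\<parallel> \<parallel>\<nabla>u\<parallel>\<close>. The growth bound on \<open>\<beta>\<close> gives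
  \<open>\<parallel>\<beta>(u)\<parallel> \<le> M (|\<Omega>|\<^sup>1\<^sup>/\<^sup>2 + \<parallel>u\<parallel>)\<close>, and Poincare once more bounds \<open>\<parallel>u\<parallel>\<close>.

  The Poincare constants are not assumed nonnegative; they are, because \<open>\<Omega>\<close> carries a
  smooth bump function (built from \<open>e\<^sup>-\<^sup>1\<^sup>/\<^sup>t\<close>) that lies in both Sobolev spaces and has
  positive norm. The weak gradients are chosen by Hilbert choice and need not be square
  integrable; when they are not, their \<open>L2norm\<close> is \<open>0\<close> and the gradient bound is trivial.\<close>

section \<open>Smooth functions\<close>

text \<open>The list \<open>p\<close> encodes the polynomial \<open>\<Sum>(c, k)\<leftarrow>p. c X^k\<close>; derivatives of
  \<open>p(1/t) e^(-1/t)\<close>, extended by zero to \<open>t \<le> 0\<close>, are again of this form.\<close>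

definition flat_exp :: "(real \<times> nat) list \<Rightarrow> real \<Rightarrow> real" where
  "flat_exp p t = (if t > 0 then (\<Sum>(c, k)\<leftarrow>p. c * (1 / t) ^ k) * exp (- 1 / t) else 0)"

fun flat_exp_deriv :: "(real \<times> nat) list \<Rightarrow> (real \<times> nat) list" where
  "flat_exp_deriv [] = []"
| "flat_exp_deriv ((c, k) # p) = (- c * real k, Suc k) # (c, Suc (Suc k)) # flat_exp_deriv p"

lemma flat_exp_Nil [simp]: "flat_exp [] t = 0"
  by (simp add: flat_exp_def)

lemma flat_exp_Cons: "flat_exp (a # p) t = flat_exp [a] t + flat_exp p t"
  by (cases a) (simp add: flat_exp_def algebra_simps)

lemma flat_exp_append: "flat_exp (p @ q) t = flat_exp p t + flat_exp q t"
  by (induction p) (simp, metis append_Cons add.assoc flat_exp_Cons)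

lemma flat_exp_deriv_Cons: "flat_exp_deriv (a # p) = flat_exp_deriv [a] @ flat_exp_deriv p"
  by (cases a) simp

lemma flat_exp_div_tendsto_0: "((\<lambda>t. flat_exp p t / t) \<longlongrightarrow> 0) (at_right 0)"
proof -
  have "((\<lambda>y. \<Sum>(c, k)\<leftarrow>p. c * (y ^ Suc k / exp y)) \<longlongrightarrow> 0) at_top"
  proof (induction p)
    case (Cons a p)
    obtain c k where a: "a = (c, k)" by fastforce
    have "((\<lambda>y. c * (y ^ Suc k / exp y) + (\<Sum>(c, k)\<leftarrow>p. c * (y ^ Suc k / exp y)))
        \<longlongrightarrow> c * 0 + 0) at_top"
      by (intro tendsto_add tendsto_mult tendsto_const tendsto_power_div_exp_0 Cons.IH)
    then show ?case by (simp add: a)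
  qed simp
  then have "((\<lambda>t. \<Sum>(c, k)\<leftarrow>p. c * (inverse t ^ Suc k / exp (inverse t))) \<longlongrightarrow> 0) (at_right 0)"
    using filterlim_compose filterlim_inverse_at_top_right by blast
  moreover have "\<forall>\<^sub>F t in at_right 0.
      (\<Sum>(c, k)\<leftarrow>p. c * (inverse t ^ Suc k / exp (inverse t))) = flat_exp p t / t"
  proof (rule eventually_mono[OF eventually_at_right_less])
    fix t :: real assume "0 < t"
    then show "(\<Sum>(c, k)\<leftarrow>p. c * (inverse t ^ Suc k / exp (inverse t))) = flat_exp p t / t"
      unfolding flat_exp_def by (induction p) (auto simp: exp_minus field_simps)
  qed
  ultimately show ?thesis
    by (rule Lim_transform_eventually)
qed

lemma has_real_derivative_flat_exp_monomial:
  "(flat_exp [(c, k)] has_real_derivative flat_exp (flat_exp_deriv [(c, k)]) t) (at t)"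
proof -
  consider "t > 0" | "t < 0" | "t = 0" by linarith
  then show ?thesis
  proof cases
    case 1
    have "((\<lambda>t. c * inverse t ^ k * exp (- inverse t)) has_real_derivative
        c * (real k * inverse t ^ (k - 1) * - (inverse t ^ 2)) * exp (- inverse t)
        + c * inverse t ^ k * (exp (- inverse t) * inverse t ^ 2)) (at t)"
      using 1 by (auto intro!: derivative_eq_intros simp: power2_eq_square)
    also have "c * (real k * inverse t ^ (k - 1) * - (inverse t ^ 2)) * exp (- inverse t)
        + c * inverse t ^ k * (exp (- inverse t) * inverse t ^ 2)
        = flat_exp (flat_exp_deriv [(c, k)]) t"
      using 1 by (cases k) (simp_all add: flat_exp_def divide_inverse power2_eq_square algebra_simps)
    finally show ?thesis
      by (rule has_field_derivative_transform_within_open[where S = "{0<..}"])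
         (use 1 in \<open>auto simp: flat_exp_def divide_inverse\<close>)
  next
    case 2
    have "((\<lambda>t. 0) has_real_derivative flat_exp (flat_exp_deriv [(c, k)]) t) (at t)"
      using 2 by (simp add: flat_exp_def)
    then show ?thesis
      by (rule has_field_derivative_transform_within_open[where S = "{..<0}"])
         (use 2 in \<open>auto simp: flat_exp_def\<close>)
  next
    case 3
    let ?q = "\<lambda>y. (flat_exp [(c, k)] y - flat_exp [(c, k)] 0) / (y - 0)"
    have "(?q \<longlongrightarrow> 0) (at_right 0)"
      using flat_exp_div_tendsto_0[of "[(c, k)]"] by (simp add: flat_exp_def)
    moreover have "(?q \<longlongrightarrow> 0) (at_left 0)"
      by (rule tendsto_eventually, rule eventually_mono[OF eventually_at_left_real[of "-1" 0]])
         (auto simp: flat_exp_def)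
    ultimately have "(?q \<longlongrightarrow> 0) (at 0)"
      by (rule filterlim_split_at[rotated])
    then show ?thesis
      using 3 by (simp add: has_field_derivative_iff flat_exp_def)
  qed
qed

lemma has_real_derivative_flat_exp:
  "(flat_exp p has_real_derivative flat_exp (flat_exp_deriv p) t) (at t)"
proof (induction p)
  case (Cons a p)
  obtain c k where a: "a = (c, k)" by fastforce
  have "((\<lambda>t. flat_exp [a] t + flat_exp p t) has_real_derivative
      flat_exp (flat_exp_deriv [a]) t + flat_exp (flat_exp_deriv p) t) (at t)"
    using has_real_derivative_flat_exp_monomial Cons.IH a by (intro derivative_intros) auto
  then show ?case
    by (subst flat_exp_Cons[abs_def], subst flat_exp_deriv_Cons) (simp add: flat_exp_append)
qed simp

lemma smooth_fun_flat_exp: "smooth_fun (flat_exp p)"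
proof (coinduction arbitrary: p rule: smooth_fun.coinduct)
  case (smooth_fun p)
  have "(flat_exp p has_derivative (\<lambda>h. flat_exp (flat_exp_deriv p) x \<bullet> h)) (at x)" for x
    by (rule has_derivative_eq_rhs[OF has_real_derivative_flat_exp[unfolded has_field_derivative_def]])
       (simp add: fun_eq_iff)
  then show ?case
    by (intro exI[of _ "flat_exp p"] exI[of _ "flat_exp (flat_exp_deriv p)"]) auto
qed

lemma smooth_fun_const: "smooth_fun (\<lambda>x::'n::euclidean_space. c)"
proof (coinduction arbitrary: c rule: smooth_fun.coinduct)
  case (smooth_fun c)
  have "((\<lambda>x::'n. c) has_derivative (\<bullet>) 0) (at x)" for x
    by (rule has_derivative_eq_rhs[OF has_derivative_const]) (simp add: fun_eq_iff)
  then show ?case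
    by (intro exI[of _ "\<lambda>x::'n. c"] exI[of _ "\<lambda>x::'n. 0::'n"]) auto
qed

definition smooth_grad :: "('n::euclidean_space \<Rightarrow> real) \<Rightarrow> 'n \<Rightarrow> 'n" where
  "smooth_grad f = (SOME g. (\<forall>x. (f has_derivative (\<lambda>h. g x \<bullet> h)) (at x))
                          \<and> (\<forall>b\<in>Basis. smooth_fun (\<lambda>x. g x \<bullet> b)))"

lemma
  assumes "smooth_fun f"
  shows has_derivative_smooth_grad: "(f has_derivative (\<lambda>h. smooth_grad f x \<bullet> h)) (at x)"
    and smooth_fun_smooth_grad: "b \<in> Basis \<Longrightarrow> smooth_fun (\<lambda>x. smooth_grad f x \<bullet> b)"
proof -
  have "\<exists>g. (\<forall>x. (f has_derivative (\<lambda>h. g x \<bullet> h)) (at x)) \<and> (\<forall>b\<in>Basis. smooth_fun (\<lambda>x. g x \<bullet> b))"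
    using assms by (cases rule: smooth_fun.cases) auto
  then have "(\<forall>x. (f has_derivative (\<lambda>h. smooth_grad f x \<bullet> h)) (at x))
      \<and> (\<forall>b\<in>Basis. smooth_fun (\<lambda>x. smooth_grad f x \<bullet> b))"
    unfolding smooth_grad_def by (rule someI_ex)
  then show "(f has_derivative (\<lambda>h. smooth_grad f x \<bullet> h)) (at x)"
    and "b \<in> Basis \<Longrightarrow> smooth_fun (\<lambda>x. smooth_grad f x \<bullet> b)"
    by auto
qed

lemma smooth_fun_real_smooth_grad: "smooth_fun (a :: real \<Rightarrow> real) \<Longrightarrow> smooth_fun (smooth_grad a)"
  using smooth_fun_smooth_grad[of a 1] by simp

lemma smooth_fun_continuous: "smooth_fun f \<Longrightarrow> continuous_on UNIV f"
  using has_derivative_smooth_grad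
  by (meson continuous_at_imp_continuous_on has_derivative_continuous)

text \<open>Closure under products and under composition are proved by coinduction over the
  finite sums \<open>\<Sum>\<^sub>i f\<^sub>i g\<^sub>i\<close> and \<open>\<Sum>\<^sub>i a\<^sub>i(h) g\<^sub>i\<close> of smooth functions, whose partial derivatives
  are sums of the same shape.\<close>

definition sum_of_products :: "(('n \<Rightarrow> real) \<times> ('n \<Rightarrow> real)) list \<Rightarrow> 'n \<Rightarrow> real" where
  "sum_of_products L x = (\<Sum>(f, g)\<leftarrow>L. f x * g x)"

fun sum_of_products_partial :: "'n::euclidean_space \<Rightarrow> (('n \<Rightarrow> real) \<times> ('n \<Rightarrow> real)) list
    \<Rightarrow> (('n \<Rightarrow> real) \<times> ('n \<Rightarrow> real)) list" where
  "sum_of_products_partial b [] = []"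
| "sum_of_products_partial b ((f, g) # L) =
     (\<lambda>x. smooth_grad f x \<bullet> b, g) # (f, \<lambda>x. smooth_grad g x \<bullet> b) # sum_of_products_partial b L"

definition sum_of_products_grad :: "(('n::euclidean_space \<Rightarrow> real) \<times> ('n \<Rightarrow> real)) list \<Rightarrow> 'n \<Rightarrow> 'n" where
  "sum_of_products_grad L x = (\<Sum>(f, g)\<leftarrow>L. g x *\<^sub>R smooth_grad f x + f x *\<^sub>R smooth_grad g x)"

lemma sum_of_products_simps [simp]:
  "sum_of_products [] x = 0"
  "sum_of_products ((f, g) # L) x = f x * g x + sum_of_products L x"
  by (simp_all add: sum_of_products_def)

lemma sum_of_products_grad_simps [simp]:
  "sum_of_products_grad [] x = 0"
  "sum_of_products_grad ((f, g) # L) x =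
     g x *\<^sub>R smooth_grad f x + f x *\<^sub>R smooth_grad g x + sum_of_products_grad L x"
  by (simp_all add: sum_of_products_grad_def)

lemma has_derivative_sum_of_products:
  assumes "\<forall>(f, g)\<in>set L. smooth_fun f \<and> smooth_fun g"
  shows "(sum_of_products L has_derivative (\<lambda>h. sum_of_products_grad L x \<bullet> h)) (at x)"
  using assms
proof (induction L)
  case Nil
  show ?case by (simp add: sum_of_products_def[abs_def])
next
  case (Cons a L)
  obtain f g where a: "a = (f, g)" by fastforce
  have f: "smooth_fun f" and g: "smooth_fun g" using Cons.prems a by auto
  have "((\<lambda>x. f x * g x + sum_of_products L x) has_derivative
      (\<lambda>h. f x * (smooth_grad g x \<bullet> h) + (smooth_grad f x \<bullet> h) * g x
           + sum_of_products_grad L x \<bullet> h)) (at x)"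
    using Cons has_derivative_smooth_grad[OF f] has_derivative_smooth_grad[OF g]
    by (intro has_derivative_add has_derivative_mult) auto
  then show ?case
    using a by (simp add: sum_of_products_simps[abs_def] inner_add_left algebra_simps)
qed

lemma sum_of_products_grad_inner:
  "sum_of_products_grad L x \<bullet> b = sum_of_products (sum_of_products_partial b L) x"
  by (induction b L rule: sum_of_products_partial.induct) (auto simp: inner_add_left algebra_simps)

lemma smooth_fun_sum_of_products:
  assumes "\<forall>(f, g)\<in>set L. smooth_fun f \<and> smooth_fun g"
  shows "smooth_fun (sum_of_products L)"
  using assms
proof (coinduction arbitrary: L rule: smooth_fun.coinduct)
  case (smooth_fun L)
  have partial: "\<forall>(f, g)\<in>set (sum_of_products_partial b L). smooth_fun f \<and> smooth_fun g"
    if "b \<in> Basis" for b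
    using smooth_fun that
    by (induction b L rule: sum_of_products_partial.induct) (auto intro: smooth_fun_smooth_grad)
  show ?case
  proof (intro exI[of _ "sum_of_products L"] exI[of _ "sum_of_products_grad L"] conjI allI impI disjI1 refl)
    show "(sum_of_products L has_derivative (\<bullet>) (sum_of_products_grad L x)) (at x)" for x
      by (rule has_derivative_sum_of_products[OF smooth_fun])
    show "\<exists>L'. (\<lambda>x. sum_of_products_grad L x \<bullet> b) = sum_of_products L'
        \<and> (\<forall>(f, g)\<in>set L'. smooth_fun f \<and> smooth_fun g)" if "b \<in> Basis" for b
      using partial[OF that] by (auto simp: fun_eq_iff sum_of_products_grad_inner)
  qed
qed

lemma smooth_fun_mult:
  assumes "smooth_fun f" "smooth_fun g"
  shows "smooth_fun (\<lambda>x. f x * g x)"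
proof -
  have "sum_of_products [(f, g)] = (\<lambda>x. f x * g x)" by (simp add: fun_eq_iff)
  then show ?thesis using smooth_fun_sum_of_products[of "[(f, g)]"] assms by simp
qed

definition sum_of_comp_products ::
    "('n \<Rightarrow> real) \<Rightarrow> ((real \<Rightarrow> real) \<times> ('n \<Rightarrow> real)) list \<Rightarrow> 'n \<Rightarrow> real" where
  "sum_of_comp_products h L x = (\<Sum>(a, g)\<leftarrow>L. a (h x) * g x)"

fun sum_of_comp_products_partial :: "('n::euclidean_space \<Rightarrow> real) \<Rightarrow> 'n
    \<Rightarrow> ((real \<Rightarrow> real) \<times> ('n \<Rightarrow> real)) list \<Rightarrow> ((real \<Rightarrow> real) \<times> ('n \<Rightarrow> real)) list" where
  "sum_of_comp_products_partial h b [] = []"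
| "sum_of_comp_products_partial h b ((a, g) # L) =
     (smooth_grad a, \<lambda>x. g x * (smooth_grad h x \<bullet> b)) # (a, \<lambda>x. smooth_grad g x \<bullet> b)
       # sum_of_comp_products_partial h b L"

definition sum_of_comp_products_grad ::
    "('n::euclidean_space \<Rightarrow> real) \<Rightarrow> ((real \<Rightarrow> real) \<times> ('n \<Rightarrow> real)) list \<Rightarrow> 'n \<Rightarrow> 'n" where
  "sum_of_comp_products_grad h L x =
     (\<Sum>(a, g)\<leftarrow>L. (g x * smooth_grad a (h x)) *\<^sub>R smooth_grad h x + a (h x) *\<^sub>R smooth_grad g x)"

lemma sum_of_comp_products_simps [simp]:
  "sum_of_comp_products h [] x = 0"
  "sum_of_comp_products h ((a, g) # L) x = a (h x) * g x + sum_of_comp_products h L x"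
  by (simp_all add: sum_of_comp_products_def)

lemma sum_of_comp_products_grad_simps [simp]:
  "sum_of_comp_products_grad h [] x = 0"
  "sum_of_comp_products_grad h ((a, g) # L) x =
     (g x * smooth_grad a (h x)) *\<^sub>R smooth_grad h x + a (h x) *\<^sub>R smooth_grad g x
     + sum_of_comp_products_grad h L x"
  by (simp_all add: sum_of_comp_products_grad_def)

lemma has_derivative_sum_of_comp_products:
  assumes h: "smooth_fun h" and L: "\<forall>(a, g)\<in>set L. smooth_fun a \<and> smooth_fun g"
  shows "(sum_of_comp_products h L has_derivative
           (\<lambda>v. sum_of_comp_products_grad h L x \<bullet> v)) (at x)"
  using L
proof (induction L)
  case Nil
  show ?case by (simp add: sum_of_comp_products_def[abs_def])
next
  case (Cons p L)
  obtain a g where p: "p = (a, g)" by fastforce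
  have a: "smooth_fun a" and g: "smooth_fun g" using Cons.prems p by auto
  have "((\<lambda>x. a (h x) * g x + sum_of_comp_products h L x) has_derivative
      (\<lambda>v. a (h x) * (smooth_grad g x \<bullet> v) + (smooth_grad a (h x) \<bullet> (smooth_grad h x \<bullet> v)) * g x
           + sum_of_comp_products_grad h L x \<bullet> v)) (at x)"
    using Cons has_derivative_smooth_grad[OF g]
    by (intro has_derivative_add has_derivative_mult
          has_derivative_compose[OF has_derivative_smooth_grad[OF h] has_derivative_smooth_grad[OF a]])
       auto
  then show ?case
    using p by (simp add: sum_of_comp_products_simps[abs_def] inner_add_left algebra_simps)
qed

lemma sum_of_comp_products_grad_inner:
  "sum_of_comp_products_grad h L x \<bullet> b = sum_of_comp_products h (sum_of_comp_products_partial h b L) x"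
  by (induction h b L rule: sum_of_comp_products_partial.induct) (auto simp: inner_add_left algebra_simps)

lemma smooth_fun_sum_of_comp_products:
  assumes h: "smooth_fun h" and "\<forall>(a, g)\<in>set L. smooth_fun a \<and> smooth_fun g"
  shows "smooth_fun (sum_of_comp_products h L)"
  using assms(2)
proof (coinduction arbitrary: L rule: smooth_fun.coinduct)
  case (smooth_fun L)
  have partial: "\<forall>(a, g)\<in>set (sum_of_comp_products_partial h b L). smooth_fun a \<and> smooth_fun g"
    if "b \<in> Basis" for b
    using smooth_fun that h
    by (induction h b L rule: sum_of_comp_products_partial.induct)
       (auto intro: smooth_fun_smooth_grad smooth_fun_mult smooth_fun_real_smooth_grad h)
  show ?case
  proof (intro exI[of _ "sum_of_comp_products h L"] exI[of _ "sum_of_comp_products_grad h L"]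
      conjI allI impI disjI1 refl)
    show "(sum_of_comp_products h L has_derivative (\<bullet>) (sum_of_comp_products_grad h L x)) (at x)" for x
      by (rule has_derivative_sum_of_comp_products[OF h smooth_fun])
    show "\<exists>L'. (\<lambda>x. sum_of_comp_products_grad h L x \<bullet> b) = sum_of_comp_products h L'
        \<and> (\<forall>(a, g)\<in>set L'. smooth_fun a \<and> smooth_fun g)" if "b \<in> Basis" for b
      using partial[OF that] by (auto simp: fun_eq_iff sum_of_comp_products_grad_inner)
  qed
qed

lemma smooth_fun_compose:
  assumes "smooth_fun h" "smooth_fun a"
  shows "smooth_fun (\<lambda>x. a (h x))"
proof -
  have "sum_of_comp_products h [(a, \<lambda>x. 1)] = (\<lambda>x. a (h x))" by (simp add: fun_eq_iff)
  then show ?thesis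
    using smooth_fun_sum_of_comp_products[of h "[(a, \<lambda>x. 1)]"] assms smooth_fun_const[of 1] by simp
qed

lemma smooth_fun_inner_const: "smooth_fun (\<lambda>x::'n::euclidean_space. x \<bullet> v + d)"
proof (rule smooth_fun.intros)
  show "((\<lambda>x. x \<bullet> v + d) has_derivative (\<lambda>h. v \<bullet> h)) (at x)" for x
    by (auto intro!: derivative_eq_intros simp: inner_commute)
qed (rule smooth_fun_const)

lemma smooth_fun_sq_dist: "smooth_fun (\<lambda>x::'n::euclidean_space. s - (x - c) \<bullet> (x - c))"
proof (rule smooth_fun.intros)
  show "((\<lambda>x. s - (x - c) \<bullet> (x - c)) has_derivative (\<lambda>h. (-2 *\<^sub>R (x - c)) \<bullet> h)) (at x)" for x
    by (auto intro!: derivative_eq_intros simp: inner_commute algebra_simps)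
  have "(\<lambda>x. (-2 *\<^sub>R (x - c)) \<bullet> b) = (\<lambda>x. x \<bullet> (-2 *\<^sub>R b) + 2 * (c \<bullet> b))" for b
    by (auto simp: fun_eq_iff algebra_simps inner_diff_left)
  then show "smooth_fun (\<lambda>x. (-2 *\<^sub>R (x - c)) \<bullet> b)" for b
    using smooth_fun_inner_const by metis
qed

definition bump :: "real \<Rightarrow> 'n::euclidean_space \<Rightarrow> 'n \<Rightarrow> real" where
  "bump s c x = flat_exp [(1, 0)] (s - (x - c) \<bullet> (x - c))"

lemma smooth_fun_bump: "smooth_fun (bump s c)"
  unfolding bump_def[abs_def] by (rule smooth_fun_compose[OF smooth_fun_sq_dist smooth_fun_flat_exp])

lemma bump_pos_iff: "bump s c x > 0 \<longleftrightarrow> (x - c) \<bullet> (x - c) < s"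
  by (simp add: bump_def flat_exp_def)

lemma bump_eq_0_iff: "bump s c x = 0 \<longleftrightarrow> s \<le> (x - c) \<bullet> (x - c)"
  by (simp add: bump_def flat_exp_def)

section \<open>Test functions\<close>

lemma test_funD:
  assumes "test_fun U \<phi> g"
  shows "\<And>x. (\<phi> has_derivative (\<lambda>h. g x \<bullet> h)) (at x)"
    and "continuous_on UNIV \<phi>" "continuous_on UNIV g"
    and "\<exists>K. compact K \<and> K \<subseteq> U \<and> (\<forall>x. x \<notin> K \<longrightarrow> \<phi> x = 0 \<and> g x = 0)"
proof -
  have \<phi>: "smooth_fun \<phi>" and d: "\<And>x. (\<phi> has_derivative (\<lambda>h. g x \<bullet> h)) (at x)"
    and "\<exists>K. compact K \<and> K \<subseteq> U \<and> (\<forall>x. x \<notin> K \<longrightarrow> \<phi> x = 0)"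
    using assms by (auto simp: test_fun_def)
  then obtain K where K: "compact K" "K \<subseteq> U" "\<And>x. x \<notin> K \<Longrightarrow> \<phi> x = 0" by blast
  show "(\<phi> has_derivative (\<lambda>h. g x \<bullet> h)) (at x)" for x by (rule d)
  show "continuous_on UNIV \<phi>" by (rule smooth_fun_continuous[OF \<phi>])
  have "g x = smooth_grad \<phi> x" for x
    using has_derivative_unique[OF d has_derivative_smooth_grad[OF \<phi>]]
    by (simp add: fun_eq_iff vector_eq_rdot)
  then have "g = (\<lambda>x. \<Sum>b\<in>Basis. (smooth_grad \<phi> x \<bullet> b) *\<^sub>R b)"
    by (simp add: fun_eq_iff euclidean_representation)
  moreover have "continuous_on UNIV (\<lambda>x. \<Sum>b\<in>Basis. (smooth_grad \<phi> x \<bullet> b) *\<^sub>R b)"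
    by (intro continuous_intros smooth_fun_continuous smooth_fun_smooth_grad[OF \<phi>])
  ultimately show "continuous_on UNIV g" by simp
  have "g x = 0" if "x \<notin> K" for x
  proof -
    have "((\<lambda>x. 0) has_derivative (\<lambda>h. g x \<bullet> h)) (at x)"
      by (rule has_derivative_transform_within_open[OF d, where s = "- K"])
         (use K that in \<open>auto simp: compact_imp_closed open_Compl\<close>)
    from has_derivative_unique[OF this has_derivative_const] have "g x \<bullet> g x = 0" by metis
    then show ?thesis by simp
  qed
  then show "\<exists>K. compact K \<and> K \<subseteq> U \<and> (\<forall>x. x \<notin> K \<longrightarrow> \<phi> x = 0 \<and> g x = 0)"
    using K by blast
qed

lemma integrable_lborel_compact_support:
  fixes F :: "'n::euclidean_space \<Rightarrow> 'm::euclidean_space"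
  assumes "continuous_on UNIV F" "compact K" "\<And>x. x \<notin> K \<Longrightarrow> F x = 0"
  shows "integrable lborel F"
proof -
  have "integrable lborel (\<lambda>x. indicator K x *\<^sub>R F x)"
    by (rule borel_integrable_compact[OF assms(2) continuous_on_subset[OF assms(1)]]) auto
  moreover have "(\<lambda>x. indicator K x *\<^sub>R F x) = F"
    using assms(3) by (auto simp: fun_eq_iff indicator_def)
  ultimately show ?thesis by simp
qed

lemma
  fixes F :: "'n::euclidean_space \<Rightarrow> 'm::euclidean_space"
  assumes "continuous_on UNIV F" "compact K" "\<And>x. x \<notin> K \<Longrightarrow> F x = 0" "K \<subseteq> U"
  shows set_integral_compact_support: "set_lebesgue_integral lebesgue U F = integral\<^sup>L lborel F"
    and set_integrable_compact_support: "set_integrable lebesgue U F"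
proof -
  have F: "(\<lambda>x. indicator U x *\<^sub>R F x) = F"
    using assms(3,4) by (auto simp: fun_eq_iff indicator_def)
  have m: "F \<in> borel_measurable lborel"
    using borel_measurable_continuous_onI[OF assms(1)] by simp
  show "set_lebesgue_integral lebesgue U F = integral\<^sup>L lborel F"
    unfolding set_lebesgue_integral_def F by (rule integral_completion[OF m])
  show "set_integrable lebesgue U F"
    unfolding set_integrable_def F
    using integrable_completion[OF m] integrable_lborel_compact_support[OF assms(1-3)] by simp
qed

lemma loc_integrable_compact_support:
  fixes F :: "'n::euclidean_space \<Rightarrow> 'm::euclidean_space"
  assumes "continuous_on UNIV F" "compact K" "\<And>x. x \<notin> K \<Longrightarrow> F x = 0"
  shows "loc_integrable U F"
  unfolding loc_integrable_def
proof (intro allI impI)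
  fix K' assume "compact K' \<and> K' \<subseteq> U"
  then have "K' \<in> sets lebesgue" using fmeasurableD[OF lmeasurable_compact] by blast
  moreover have "integrable lebesgue F"
    using integrable_completion[of F lborel] borel_measurable_continuous_onI[OF assms(1)]
      integrable_lborel_compact_support[OF assms] by simp
  ultimately show "set_integrable lebesgue K' F"
    unfolding set_integrable_def by (rule integrable_mult_indicator)
qed

lemma L2_compact_support:
  fixes F :: "'n::euclidean_space \<Rightarrow> 'm::euclidean_space"
  assumes "continuous_on UNIV F" "compact K" "\<And>x. x \<notin> K \<Longrightarrow> F x = 0" "K \<subseteq> U"
  shows "L2 U F"
  unfolding L2_def
proof
  have "(\<lambda>x. indicator U x *\<^sub>R F x) = F"
    using assms(3,4) by (auto simp: fun_eq_iff indicator_def)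
  then show "set_borel_measurable lebesgue U F"
    unfolding set_borel_measurable_def
    using borel_measurable_continuous_onI[OF assms(1)] by (auto intro: measurable_completion)
  show "set_integrable lebesgue U (\<lambda>x. (norm (F x))\<^sup>2)"
    by (rule set_integrable_compact_support[OF _ assms(2) _ assms(4)])
       (use assms in \<open>auto intro: continuous_intros\<close>)
qed

lemma
  fixes w :: "'n::euclidean_space \<Rightarrow> 'm::{banach, second_countable_topology}"
  assumes "integrable lborel w"
  shows integrable_lborel_shift: "integrable lborel (\<lambda>x. w (x + c))"
    and integral_lborel_shift: "integral\<^sup>L lborel (\<lambda>x. w (x + c)) = integral\<^sup>L lborel w"
proof -
  have m: "w \<in> borel_measurable lborel" using assms by (rule borel_measurable_integrable)
  have "integrable (distr lborel borel ((+) c)) w" using assms by (simp add: lborel_distr_plus)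
  then show "integrable lborel (\<lambda>x. w (x + c))"
    by (subst (asm) integrable_distr_eq) (use m in \<open>auto simp: add.commute\<close>)
  have "integral\<^sup>L lborel w = integral\<^sup>L (distr lborel borel ((+) c)) w"
    by (simp add: lborel_distr_plus)
  also have "\<dots> = integral\<^sup>L lborel (\<lambda>x. w (x + c))"
    by (subst integral_distr) (use m in \<open>auto simp: add.commute\<close>)
  finally show "integral\<^sup>L lborel (\<lambda>x. w (x + c)) = integral\<^sup>L lborel w" ..
qed

lemma abs_diff_le_of_grad_bound_on_segment:
  fixes w :: "'n::euclidean_space \<Rightarrow> real"
  assumes w: "\<And>y. (w has_derivative (\<lambda>h. G y \<bullet> h)) (at y)"
    and B: "\<And>y. y \<in> closed_segment x (x + b) \<Longrightarrow> norm (G y) \<le> B"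
    and t: "0 \<le> t" "t \<le> 1"
  shows "\<bar>w (x + t *\<^sub>R b) - w x\<bar> \<le> B * norm b * t"
proof -
  have "norm (w (x + t *\<^sub>R b) - w x) \<le> B * norm ((x + t *\<^sub>R b) - x)"
  proof (rule differentiable_bound[OF convex_closed_segment])
    show "(w has_derivative (\<lambda>h. G y \<bullet> h)) (at y within closed_segment x (x + b))" for y
      using w by (rule has_derivative_at_withinI)
    show "onorm (\<lambda>h. G y \<bullet> h) \<le> B" if "y \<in> closed_segment x (x + b)" for y
    proof (rule onorm_le)
      fix h
      have "norm (G y \<bullet> h) \<le> norm (G y) * norm h" by (simp add: Cauchy_Schwarz_ineq2)
      also have "\<dots> \<le> B * norm h" using B[OF that] by (rule mult_right_mono) simp
      finally show "norm (G y \<bullet> h) \<le> B * norm h" .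
    qed
    show "x + t *\<^sub>R b \<in> closed_segment x (x + b)"
      using t by (auto simp: closed_segment_def intro!: exI[of _ t] simp: algebra_simps)
  qed simp
  then show ?thesis using t by (simp add: mult.commute mult.left_commute)
qed

lemma tendsto_difference_quotient:
  fixes w :: "'n::euclidean_space \<Rightarrow> real"
  assumes w: "(w has_derivative (\<lambda>h. G \<bullet> h)) (at x)" and t: "t \<longlonglongrightarrow> 0" "\<And>n. t n \<noteq> 0"
  shows "(\<lambda>n. (w (x + t n *\<^sub>R b) - w x) / t n) \<longlonglongrightarrow> G \<bullet> b"
proof -
  have "((\<lambda>\<tau>. x + \<tau> *\<^sub>R b) has_derivative (\<lambda>\<tau>. \<tau> *\<^sub>R b)) (at 0)"
    by (auto intro!: derivative_eq_intros)
  moreover have "(w has_derivative (\<lambda>h. G \<bullet> h)) (at (x + 0 *\<^sub>R b))"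
    using w by simp
  ultimately have "((\<lambda>\<tau>. w (x + \<tau> *\<^sub>R b)) has_derivative (\<lambda>\<tau>. G \<bullet> (\<tau> *\<^sub>R b))) (at 0)"
    by (rule has_derivative_compose)
  then have "((\<lambda>\<tau>. w (x + \<tau> *\<^sub>R b)) has_real_derivative G \<bullet> b) (at 0)"
    unfolding has_field_derivative_def by (rule has_derivative_eq_rhs) (auto simp: fun_eq_iff)
  then have "((\<lambda>\<tau>. (w (x + \<tau> *\<^sub>R b) - w x) / \<tau>) \<longlongrightarrow> G \<bullet> b) (at 0)"
    by (simp add: has_field_derivative_iff)
  moreover have "filterlim t (at 0) sequentially"
    using t unfolding filterlim_at by auto
  ultimately show ?thesis
    by (rule filterlim_compose)
qed

lemma abs_difference_quotient_le:
  fixes w :: "'n::euclidean_space \<Rightarrow> real"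
  assumes w: "\<And>y. (w has_derivative (\<lambda>h. G y \<bullet> h)) (at y)"
    and R: "\<And>y. R < norm y \<Longrightarrow> w y = 0"
    and B: "\<And>y. y \<in> cball 0 (R + 2 * norm b) \<Longrightarrow> norm (G y) \<le> B"
    and t: "0 < t" "t \<le> 1"
  shows "\<bar>(w (x + t *\<^sub>R b) - w x) / t\<bar> \<le> indicator (cball 0 (R + norm b)) x * (B * norm b)"
proof (cases "x \<in> cball 0 (R + norm b)")
  case True
  have seg: "closed_segment x (x + b) \<subseteq> cball 0 (R + 2 * norm b)"
  proof (rule closed_segment_subset)
    show "x \<in> cball 0 (R + 2 * norm b)"
      using True norm_ge_zero[of b] unfolding mem_cball_0 by linarith
    show "x + b \<in> cball 0 (R + 2 * norm b)"
      using True norm_triangle_ineq[of x b] by simp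
  qed simp
  have "\<bar>w (x + t *\<^sub>R b) - w x\<bar> \<le> B * norm b * t"
    by (rule abs_diff_le_of_grad_bound_on_segment[OF w B[OF subsetD[OF seg]] less_imp_le[OF t(1)] t(2)])
  then show ?thesis
    using True t by (simp add: abs_divide divide_le_eq)
next
  case False
  have "norm (t *\<^sub>R b) \<le> norm b"
    using t by (simp add: mult_left_le_one_le)
  then have "R < norm (x + t *\<^sub>R b)"
    using False norm_triangle_ineq4[of "x + t *\<^sub>R b" "t *\<^sub>R b"] by simp
  moreover have "R < norm x"
    using False norm_ge_zero[of b] unfolding mem_cball_0 by linarith
  ultimately show ?thesis
    using False by (simp add: R)
qed

text \<open>The difference quotients of \<open>w\<close> in direction \<open>b\<close> integrate to zero by translation
  invariance, and converge to \<open>G \<bullet> b\<close> dominatedly.\<close>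

lemma integral_lborel_partial_derivative_eq_0:
  fixes w :: "'n::euclidean_space \<Rightarrow> real"
  assumes w: "\<And>x. (w has_derivative (\<lambda>h. G x \<bullet> h)) (at x)" and G: "continuous_on UNIV G"
    and K: "compact K" "\<And>x. x \<notin> K \<Longrightarrow> w x = 0"
  shows "integral\<^sup>L lborel (\<lambda>x. G x \<bullet> b) = 0"
proof -
  obtain R where "\<And>x. x \<in> K \<Longrightarrow> norm x \<le> R"
    using compact_imp_bounded[OF K(1)] unfolding bounded_pos by blast
  then have R: "\<And>x. R < norm x \<Longrightarrow> w x = 0"
    using K(2) by force
  obtain B where B: "\<And>y. y \<in> cball 0 (R + 2 * norm b) \<Longrightarrow> norm (G y) \<le> B"
    using compact_imp_bounded[OF compact_continuous_image[OF continuous_on_subset[OF G]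
        compact_cball[of 0 "R + 2 * norm b"]]]
    unfolding bounded_iff by blast
  have wc: "continuous_on UNIV w"
    using w by (meson continuous_at_imp_continuous_on has_derivative_continuous)
  have wi: "integrable lborel w" by (rule integrable_lborel_compact_support[OF wc K])
  have wm: "w \<in> borel_measurable lborel" using borel_measurable_continuous_onI[OF wc] by simp
  define t where "t n = 1 / real (Suc n)" for n
  have t: "0 < t n" "t n \<le> 1" for n by (auto simp: t_def field_simps)
  have t_lim: "t \<longlonglongrightarrow> 0"
    unfolding t_def using LIMSEQ_inverse_real_of_nat by (simp add: inverse_eq_divide)
  define s where "s n x = (w (x + t n *\<^sub>R b) - w x) / t n" for n x
  let ?bound = "\<lambda>x::'n. indicator (cball 0 (R + norm b)) x *\<^sub>R (B * norm b)"
  have "(\<lambda>n. integral\<^sup>L lborel (s n)) \<longlonglongrightarrow> integral\<^sup>L lborel (\<lambda>x. G x \<bullet> b)"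
  proof (rule integral_dominated_convergence[where w = ?bound])
    show "(\<lambda>x. G x \<bullet> b) \<in> borel_measurable lborel"
      using borel_measurable_continuous_onI[OF continuous_on_inner[OF G continuous_on_const]] by simp
    show "s n \<in> borel_measurable lborel" for n
      unfolding s_def using wm by measurable
    show "integrable lborel ?bound"
      by (rule borel_integrable_compact) (auto intro: continuous_on_const)
    show "AE x in lborel. (\<lambda>n. s n x) \<longlonglongrightarrow> G x \<bullet> b"
      unfolding s_def using t(1) by (intro AE_I2 tendsto_difference_quotient[OF w t_lim] less_imp_neq[symmetric])
    show "AE x in lborel. norm (s n x) \<le> ?bound x" for n
      using abs_difference_quotient_le[OF w R B t(1)[of n] t(2)[of n]] unfolding s_def
      by (intro AE_I2) simp
  qed
  moreover have "integral\<^sup>L lborel (s n) = 0" for n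
    using wi unfolding s_def
    by (simp add: integrable_lborel_shift integral_lborel_shift Bochner_Integration.integral_diff)
  ultimately show ?thesis by (simp add: LIMSEQ_const_iff)
qed

lemma test_fun_integration_by_parts:
  assumes \<phi>: "test_fun U \<phi> g" and \<psi>: "test_fun U \<psi> k"
  shows "set_lebesgue_integral lebesgue U (\<lambda>x. \<phi> x *\<^sub>R k x)
       = - set_lebesgue_integral lebesgue U (\<lambda>x. \<psi> x *\<^sub>R g x)"
proof -
  note \<phi>D = test_funD[OF \<phi>] and \<psi>D = test_funD[OF \<psi>]
  obtain K where K: "compact K" "K \<subseteq> U" "\<And>x. x \<notin> K \<Longrightarrow> \<phi> x = 0 \<and> g x = 0"
    using \<phi>D(4) by blast
  have c1: "continuous_on UNIV (\<lambda>x. \<phi> x *\<^sub>R k x)" and c2: "continuous_on UNIV (\<lambda>x. \<psi> x *\<^sub>R g x)"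
    using \<phi>D \<psi>D by (auto intro: continuous_intros)
  have z1: "\<And>x. x \<notin> K \<Longrightarrow> \<phi> x *\<^sub>R k x = 0" and z2: "\<And>x. x \<notin> K \<Longrightarrow> \<psi> x *\<^sub>R g x = 0"
    using K by auto
  note i1 = integrable_lborel_compact_support[OF c1 K(1) z1]
  note i2 = integrable_lborel_compact_support[OF c2 K(1) z2]
  have "((\<lambda>x. \<phi> x * \<psi> x) has_derivative (\<lambda>h. (\<phi> x *\<^sub>R k x + \<psi> x *\<^sub>R g x) \<bullet> h)) (at x)" for x
    by (rule has_derivative_eq_rhs[OF has_derivative_mult[OF \<phi>D(1) \<psi>D(1)]])
       (auto simp: fun_eq_iff inner_add_left)
  then have "integral\<^sup>L lborel (\<lambda>x. (\<phi> x *\<^sub>R k x + \<psi> x *\<^sub>R g x) \<bullet> b) = 0" for b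
    by (rule integral_lborel_partial_derivative_eq_0) (use c1 c2 K in \<open>auto intro: continuous_intros\<close>)
  then have "integral\<^sup>L lborel (\<lambda>x. \<phi> x *\<^sub>R k x) + integral\<^sup>L lborel (\<lambda>x. \<psi> x *\<^sub>R g x) = 0"
  proof (intro euclidean_eqI[where 'a = 'a])
    fix b :: 'a
    have "(integral\<^sup>L lborel (\<lambda>x. \<phi> x *\<^sub>R k x) + integral\<^sup>L lborel (\<lambda>x. \<psi> x *\<^sub>R g x)) \<bullet> b
        = integral\<^sup>L lborel (\<lambda>x. (\<phi> x *\<^sub>R k x + \<psi> x *\<^sub>R g x) \<bullet> b)"
      using i1 i2 by (simp add: Bochner_Integration.integral_add integral_inner_left)
    also have "\<dots> = 0" by fact
    finally show "(integral\<^sup>L lborel (\<lambda>x. \<phi> x *\<^sub>R k x)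
        + integral\<^sup>L lborel (\<lambda>x. \<psi> x *\<^sub>R g x)) \<bullet> b = 0 \<bullet> b" by simp
  qed
  moreover note set_integral_compact_support[OF c1 K(1) z1 K(2)]
    set_integral_compact_support[OF c2 K(1) z2 K(2)]
  ultimately show ?thesis by (simp add: eq_neg_iff_add_eq_0)
qed

lemma
  assumes "test_fun U \<phi> g"
  shows L2_test_fun: "L2 U \<phi>"
    and is_weak_grad_test_fun: "is_weak_grad U \<phi> g"
    and H01_test_fun: "H01 U \<phi>"
proof -
  note \<phi>D = test_funD[OF assms]
  obtain K where K: "compact K" "K \<subseteq> U" "\<And>x. x \<notin> K \<Longrightarrow> \<phi> x = 0 \<and> g x = 0"
    using \<phi>D(4) by blast
  show L2: "L2 U \<phi>" using L2_compact_support[OF \<phi>D(2) K(1) _ K(2)] K(3) by auto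
  have "L2 U g" using L2_compact_support[OF \<phi>D(3) K(1) _ K(2)] K(3) by auto
  show W: "is_weak_grad U \<phi> g"
    unfolding is_weak_grad_def
    using loc_integrable_compact_support[OF \<phi>D(2) K(1)] loc_integrable_compact_support[OF \<phi>D(3) K(1)]
      K(3) test_fun_integration_by_parts[OF assms] by auto
  show "H01 U \<phi>"
    unfolding H01_def using assms \<open>L2 U g\<close>
    by (intro conjI L2 exI[of _ g] W exI[of _ "\<lambda>n. \<phi>"] exI[of _ "\<lambda>n. g"] allI)
       (simp_all add: L2norm_def)
qed

lemma set_integral_snd:
  fixes F :: "'n::euclidean_space \<Rightarrow> 'a::euclidean_space \<times> 'b::euclidean_space"
  assumes "set_integrable lebesgue U F"
  shows "set_lebesgue_integral lebesgue U (\<lambda>x. snd (F x)) = snd (set_lebesgue_integral lebesgue U F)"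
proof -
  have "set_lebesgue_integral lebesgue U (\<lambda>x. snd (F x))
      = integral\<^sup>L lebesgue (\<lambda>x. snd (indicator U x *\<^sub>R F x))"
    by (simp add: set_lebesgue_integral_def)
  also have "\<dots> = snd (integral\<^sup>L lebesgue (\<lambda>x. indicator U x *\<^sub>R F x))"
    using assms unfolding set_integrable_def by (rule integral_bounded_linear[OF bounded_linear_snd])
  finally show ?thesis by (simp add: set_lebesgue_integral_def)
qed

lemma is_weak_grad2_test_fun:
  assumes \<phi>: "test_fun (\<omega>1 \<times> \<omega>2) \<phi> g"
  shows "is_weak_grad2 (\<omega>1 \<times> \<omega>2) \<phi> (\<lambda>x. snd (g x))"
  unfolding is_weak_grad2_def
proof (intro conjI allI impI)
  let ?U = "\<omega>1 \<times> \<omega>2"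
  note \<phi>D = test_funD[OF \<phi>]
  obtain K where K: "compact K" "K \<subseteq> ?U" "\<And>x. x \<notin> K \<Longrightarrow> \<phi> x = 0 \<and> g x = 0"
    using \<phi>D(4) by blast
  show "loc_integrable ?U \<phi>"
    using is_weak_grad_test_fun[OF \<phi>] by (simp add: is_weak_grad_def)
  show "loc_integrable ?U (\<lambda>x. snd (g x))"
    by (rule loc_integrable_compact_support[OF _ K(1)]) (use \<phi>D K in \<open>auto intro: continuous_intros\<close>)
  fix \<psi> k assume \<psi>: "test_fun ?U \<psi> k"
  note \<psi>D = test_funD[OF \<psi>]
  have i1: "set_integrable lebesgue ?U (\<lambda>x. \<phi> x *\<^sub>R k x)"
    and i2: "set_integrable lebesgue ?U (\<lambda>x. \<psi> x *\<^sub>R g x)"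
    by (rule set_integrable_compact_support[OF _ K(1) _ K(2)];
        use \<phi>D \<psi>D K in \<open>auto intro: continuous_intros\<close>)+
  have "set_lebesgue_integral lebesgue ?U (\<lambda>x. \<phi> x *\<^sub>R snd (k x))
      = snd (set_lebesgue_integral lebesgue ?U (\<lambda>x. \<phi> x *\<^sub>R k x))"
    using set_integral_snd[OF i1] by simp
  also have "\<dots> = snd (- set_lebesgue_integral lebesgue ?U (\<lambda>x. \<psi> x *\<^sub>R g x))"
    by (simp only: test_fun_integration_by_parts[OF \<phi> \<psi>])
  also have "\<dots> = - set_lebesgue_integral lebesgue ?U (\<lambda>x. \<psi> x *\<^sub>R snd (g x))"
    using set_integral_snd[OF i2] by simp
  finally show "set_lebesgue_integral lebesgue ?U (\<lambda>x. \<phi> x *\<^sub>R snd (k x))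
      = - set_lebesgue_integral lebesgue ?U (\<lambda>x. \<psi> x *\<^sub>R snd (g x))" .
qed

lemma H01_X2_test_fun:
  assumes \<phi>: "test_fun (\<omega>1 \<times> \<omega>2) \<phi> g"
    and slices: "\<And>X1. X1 \<in> \<omega>1 \<Longrightarrow> H01 \<omega>2 (\<lambda>X2. \<phi> (X1, X2))"
  shows "H01_X2 \<omega>1 \<omega>2 \<phi>"
  unfolding H01_X2_def
proof (intro conjI exI[of _ "\<lambda>x. snd (g x)"] AE_I2 impI slices)
  note \<phi>D = test_funD[OF \<phi>]
  obtain K where K: "compact K" "K \<subseteq> \<omega>1 \<times> \<omega>2" "\<And>x. x \<notin> K \<Longrightarrow> \<phi> x = 0 \<and> g x = 0"
    using \<phi>D(4) by blast
  show "L2 (\<omega>1 \<times> \<omega>2) \<phi>" by (rule L2_test_fun[OF \<phi>])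
  show "is_weak_grad2 (\<omega>1 \<times> \<omega>2) \<phi> (\<lambda>x. snd (g x))" by (rule is_weak_grad2_test_fun[OF \<phi>])
  show "L2 (\<omega>1 \<times> \<omega>2) (\<lambda>x. snd (g x))"
    by (rule L2_compact_support[OF _ K(1) _ K(2)]) (use \<phi>D K in \<open>auto intro: continuous_intros\<close>)
qed

lemma test_fun_bump:
  assumes "\<And>y. (y - c) \<bullet> (y - c) \<le> s \<Longrightarrow> y \<in> U"
  shows "test_fun U (bump s c) (smooth_grad (bump s c))"
proof -
  define K where "K = {y. (y - c) \<bullet> (y - c) \<le> s}"
  have "K \<subseteq> cball c (sqrt \<bar>s\<bar>)"
  proof
    fix y assume "y \<in> K"
    then have "(norm (y - c))\<^sup>2 \<le> \<bar>s\<bar>" by (simp add: K_def power2_norm_eq_inner)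
    then have "norm (y - c) \<le> sqrt \<bar>s\<bar>" by (rule real_le_rsqrt)
    then show "y \<in> cball c (sqrt \<bar>s\<bar>)" by (simp add: dist_norm norm_minus_commute)
  qed
  then have "bounded K" by (rule bounded_subset[OF bounded_cball])
  moreover have "closed K"
    unfolding K_def by (intro closed_Collect_le continuous_intros)
  ultimately have "compact K"
    using compact_eq_bounded_closed by blast
  moreover have "K \<subseteq> U" "\<And>x. x \<notin> K \<Longrightarrow> bump s c x = 0"
    using assms by (auto simp: K_def bump_eq_0_iff)
  ultimately show ?thesis
    unfolding test_fun_def using smooth_fun_bump has_derivative_smooth_grad[OF smooth_fun_bump] by blast
qed

lemma L2norm_bump_pos:
  assumes "\<And>y. (y - c) \<bullet> (y - c) \<le> s \<Longrightarrow> y \<in> U" "s > 0"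
  shows "L2norm U (bump s c) > 0"
proof -
  have "test_fun U (bump s c) (smooth_grad (bump s c))"
    using assms(1) by (rule test_fun_bump)
  note bumpD = test_funD[OF this]
  obtain K where K: "compact K" "K \<subseteq> U" "\<And>x. x \<notin> K \<Longrightarrow> bump s c x = 0"
    using bumpD(4) by blast
  let ?F = "\<lambda>x. (norm (bump s c x))\<^sup>2"
  have cont: "continuous_on UNIV ?F" using bumpD(2) by (intro continuous_intros)
  have int: "integrable lborel ?F"
    by (rule integrable_lborel_compact_support[OF cont K(1)]) (use K in auto)
  have ball: "ball c (sqrt s) \<subseteq> {x. ?F x \<noteq> 0}"
  proof
    fix x assume "x \<in> ball c (sqrt s)"
    then have "(norm (x - c))\<^sup>2 < (sqrt s)\<^sup>2"
      by (intro power_strict_mono) (auto simp: dist_norm norm_minus_commute)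
    then have "bump s c x > 0"
      using assms(2) by (simp add: bump_pos_iff power2_norm_eq_inner)
    then show "x \<in> {x. ?F x \<noteq> 0}" by simp
  qed
  have "\<not> (AE x in lborel. ?F x = 0)"
  proof
    assume "AE x in lborel. ?F x = 0"
    then obtain N where N: "{x \<in> space lborel. \<not> ?F x = 0} \<subseteq> N" "emeasure lborel N = 0"
      "N \<in> sets lborel"
      by (rule AE_E)
    have "emeasure lborel (ball c (sqrt s)) \<le> emeasure lborel N"
      using ball N by (intro emeasure_mono) auto
    then have "measure lborel (ball c (sqrt s)) = 0"
      using N(2) by (simp add: measure_def)
    then show False
      using content_ball_pos[of "sqrt s" c] assms(2) by simp
  qed
  then have "integral\<^sup>L lborel ?F \<noteq> 0"
    using integral_nonneg_eq_0_iff_AE[OF int] by simp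
  moreover have "integral\<^sup>L lborel ?F \<ge> 0" by simp
  ultimately have "integral\<^sup>L lborel ?F > 0" by linarith
  moreover have "set_lebesgue_integral lebesgue U ?F = integral\<^sup>L lborel ?F"
    by (rule set_integral_compact_support[OF cont K(1) _ K(2)]) (use K in auto)
  ultimately show ?thesis
    unfolding L2norm_def by simp
qed

lemma bump_Pair:
  "bump s (c1, c2) (X1, X2) = bump (s - (X1 - c1) \<bullet> (X1 - c1)) c2 X2"
  by (simp add: bump_def algebra_simps)

lemma exists_H01_H01_X2_L2norm_pos:
  fixes \<omega>1 :: "'a::euclidean_space set" and \<omega>2 :: "'b::euclidean_space set"
  assumes "open \<omega>1" "open \<omega>2" "\<omega>1 \<times> \<omega>2 \<noteq> {}"
  obtains v where "H01 (\<omega>1 \<times> \<omega>2) v" "H01_X2 \<omega>1 \<omega>2 v" "L2norm (\<omega>1 \<times> \<omega>2) v > 0"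
proof -
  obtain c where "c \<in> \<omega>1 \<times> \<omega>2" using assms(3) by blast
  then obtain r where r: "r > 0" "cball c r \<subseteq> \<omega>1 \<times> \<omega>2"
    using open_contains_cball assms(1,2) open_Times by blast
  define s where "s = r\<^sup>2"
  have inside: "y \<in> \<omega>1 \<times> \<omega>2" if "(y - c) \<bullet> (y - c) \<le> s" for y
  proof -
    have "(norm (y - c))\<^sup>2 \<le> r\<^sup>2" using that by (simp add: s_def power2_norm_eq_inner)
    then have "norm (y - c) \<le> r" using r(1) by (simp add: power2_le_iff_abs_le)
    then show ?thesis using r(2) by (auto simp: dist_norm norm_minus_commute)
  qed
  obtain c1 c2 where c: "c = (c1, c2)" by fastforce
  have slice: "H01 \<omega>2 (\<lambda>X2. bump s c (X1, X2))" for X1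
  proof -
    let ?s = "s - (X1 - c1) \<bullet> (X1 - c1)"
    have "y \<in> \<omega>2" if "(y - c2) \<bullet> (y - c2) \<le> ?s" for y
      using inside[of "(X1, y)"] that by (simp add: c)
    then have "test_fun \<omega>2 (bump ?s c2) (smooth_grad (bump ?s c2))" by (rule test_fun_bump)
    then show ?thesis unfolding c bump_Pair by (rule H01_test_fun)
  qed
  note bump = test_fun_bump[of c s "\<omega>1 \<times> \<omega>2", OF inside]
  show ?thesis
    using that H01_test_fun[OF bump] H01_X2_test_fun[OF bump slice]
      L2norm_bump_pos[of c s "\<omega>1 \<times> \<omega>2", OF inside] r(1) by (simp add: s_def)
qed
section \<open>\<open>L\<^sup>2\<close> estimates\<close>

lemma set_integral_power2_norm_nonneg:
  "0 \<le> set_lebesgue_integral lebesgue U (\<lambda>x. (norm (F x))\<^sup>2)"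
  unfolding set_lebesgue_integral_def by (rule integral_nonneg_AE) (simp add: indicator_def)

lemma power2_L2norm: "(L2norm U F)\<^sup>2 = set_lebesgue_integral lebesgue U (\<lambda>x. (norm (F x))\<^sup>2)"
  using set_integral_power2_norm_nonneg by (simp add: L2norm_def)

lemma L2norm_nonneg: "0 \<le> L2norm U F"
  using set_integral_power2_norm_nonneg by (simp add: L2norm_def)

lemma L2norm_empty [simp]: "L2norm {} F = 0"
  by (simp add: L2norm_def set_lebesgue_integral_def)

lemma L2norm_eq_0_if_not_set_integrable:
  "\<not> set_integrable lebesgue U (\<lambda>x. (norm (F x))\<^sup>2) \<Longrightarrow> L2norm U F = 0"
  unfolding L2norm_def set_lebesgue_integral_def set_integrable_def
  by (simp add: not_integrable_integral_eq)

lemma L2norm_mult: "L2norm U (\<lambda>x. c * g x) = \<bar>c\<bar> * L2norm U g"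
  by (simp add: L2norm_def power_mult_distrib set_integral_mult_right real_sqrt_mult)

lemma le_sqrt_mult_sqrt_if_weighted_AM_GM:
  fixes I A B :: real
  assumes "A \<ge> 0" "B \<ge> 0" and AM_GM: "\<And>t. t > 0 \<Longrightarrow> 2 * I \<le> t * A + B / t"
  shows "I \<le> sqrt A * sqrt B"
proof (cases "A > 0 \<and> B > 0")
  case True
  have "2 * I \<le> (sqrt B / sqrt A) * A + B / (sqrt B / sqrt A)"
    using True by (intro AM_GM) auto
  also have "\<dots> = 2 * (sqrt A * sqrt B)"
    using True by (simp add: field_simps)
  finally show ?thesis by simp
next
  case False
  show ?thesis
  proof (rule ccontr)
    assume "\<not> I \<le> sqrt A * sqrt B"
    then have I: "I > 0" using False assms(1,2) by auto
    show False
    proof (cases "A = 0")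
      case True
      have "2 * I \<le> ((B + 1) / I) * A + B / ((B + 1) / I)" using I assms by (intro AM_GM) auto
      also have "\<dots> < I" using True I assms by (simp add: field_simps)
      finally show False using I by simp
    next
      case False
      then have "B = 0" using \<open>\<not> (A > 0 \<and> B > 0)\<close> assms by auto
      have "2 * I \<le> (I / (A + 1)) * A + B / (I / (A + 1))" using I assms by (intro AM_GM) auto
      also have "\<dots> < I" using \<open>B = 0\<close> I assms by (simp add: field_simps)
      finally show False using I by simp
    qed
  qed
qed

lemma two_abs_mult_le: "t > 0 \<Longrightarrow> 2 * \<bar>a * b\<bar> \<le> t * a\<^sup>2 + b\<^sup>2 / (t :: real)"
proof -
  assume t: "t > 0"
  have "0 \<le> (t * \<bar>a\<bar> - \<bar>b\<bar>)\<^sup>2" by simp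
  then have "2 * t * \<bar>a * b\<bar> \<le> t\<^sup>2 * a\<^sup>2 + b\<^sup>2"
    by (simp add: power2_eq_square algebra_simps abs_mult)
  then show ?thesis using t by (simp add: field_simps power2_eq_square)
qed

lemma L2_Cauchy_Schwarz:
  fixes f g :: "'n::euclidean_space \<Rightarrow> real"
  assumes f: "L2 U f" and g: "L2 U g"
  shows "set_integrable lebesgue U (\<lambda>x. f x * g x)"
    and "set_lebesgue_integral lebesgue U (\<lambda>x. \<bar>f x * g x\<bar>) \<le> L2norm U f * L2norm U g"
    and "set_lebesgue_integral lebesgue U (\<lambda>x. f x * g x) \<le> L2norm U f * L2norm U g"
proof -
  have fm: "set_borel_measurable lebesgue U f" and fi: "set_integrable lebesgue U (\<lambda>x. (f x)\<^sup>2)"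
    and gm: "set_borel_measurable lebesgue U g" and gi: "set_integrable lebesgue U (\<lambda>x. (g x)\<^sup>2)"
    using f g by (auto simp: L2_def)
  have m: "set_borel_measurable lebesgue U (\<lambda>x. f x * g x)"
    using fm gm unfolding set_borel_measurable_def
    by (rule borel_measurable_times[THEN measurable_cong[THEN iffD1, rotated]])
       (auto simp: indicator_def)
  have weighted: "set_integrable lebesgue U (\<lambda>x. t * (f x)\<^sup>2 + (g x)\<^sup>2 / t)" for t
    using fi gi by (intro set_integral_add(1) set_integrable_mult_right set_integrable_divide)
  have "\<bar>f x * g x\<bar> \<le> 1 * (f x)\<^sup>2 + (g x)\<^sup>2 / 1" for x
    using two_abs_mult_le[of 1 "f x" "g x"] by simp
  then show i: "set_integrable lebesgue U (\<lambda>x. f x * g x)"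
    by (intro set_integrable_bound[OF weighted[of 1] m] AE_I2) (auto intro: order_trans)
  then have ia: "set_integrable lebesgue U (\<lambda>x. \<bar>f x * g x\<bar>)"
    by (rule set_integrable_abs)
  have "set_lebesgue_integral lebesgue U (\<lambda>x. \<bar>f x * g x\<bar>)
      \<le> sqrt ((L2norm U f)\<^sup>2) * sqrt ((L2norm U g)\<^sup>2)"
  proof (rule le_sqrt_mult_sqrt_if_weighted_AM_GM)
    fix t :: real assume t: "t > 0"
    have "2 * set_lebesgue_integral lebesgue U (\<lambda>x. \<bar>f x * g x\<bar>)
        = set_lebesgue_integral lebesgue U (\<lambda>x. 2 * \<bar>f x * g x\<bar>)"
      by (simp add: set_integral_mult_right)
    also have "\<dots> \<le> set_lebesgue_integral lebesgue U (\<lambda>x. t * (f x)\<^sup>2 + (g x)\<^sup>2 / t)"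
      using ia weighted two_abs_mult_le[OF t]
      by (intro set_integral_mono set_integrable_mult_right) auto
    also have "\<dots> = t * (L2norm U f)\<^sup>2 + (L2norm U g)\<^sup>2 / t"
      using fi gi
      by (simp add: power2_L2norm set_integral_add set_integrable_mult_right set_integrable_divide
          set_integral_mult_right set_integral_divide_zero)
    finally show "2 * set_lebesgue_integral lebesgue U (\<lambda>x. \<bar>f x * g x\<bar>)
        \<le> t * (L2norm U f)\<^sup>2 + (L2norm U g)\<^sup>2 / t" .
  qed auto
  then show abs_le: "set_lebesgue_integral lebesgue U (\<lambda>x. \<bar>f x * g x\<bar>) \<le> L2norm U f * L2norm U g"
    by (simp add: L2norm_nonneg)
  have "set_lebesgue_integral lebesgue U (\<lambda>x. f x * g x)
      \<le> set_lebesgue_integral lebesgue U (\<lambda>x. \<bar>f x * g x\<bar>)"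
    by (rule set_integral_mono[OF i ia]) simp
  with abs_le show "set_lebesgue_integral lebesgue U (\<lambda>x. f x * g x) \<le> L2norm U f * L2norm U g"
    by linarith
qed

lemma L2_mono:
  fixes F :: "'n::euclidean_space \<Rightarrow> 'm::euclidean_space" and g :: "'n \<Rightarrow> real"
  assumes F: "set_borel_measurable lebesgue U F" and g: "L2 U g"
    and le: "\<And>x. x \<in> U \<Longrightarrow> norm (F x) \<le> g x"
  shows "L2 U F" "L2norm U F \<le> L2norm U g"
proof -
  have sq_le: "(norm (F x))\<^sup>2 \<le> (g x)\<^sup>2" if "x \<in> U" for x
    using le[OF that] by (intro power_mono) auto
  have gi: "set_integrable lebesgue U (\<lambda>x. (g x)\<^sup>2)" using g by (simp add: L2_def)
  have "(\<lambda>x. (norm (indicator U x *\<^sub>R F x))\<^sup>2) \<in> borel_measurable lebesgue"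
    using F unfolding set_borel_measurable_def by measurable
  moreover have "(\<lambda>x. (norm (indicator U x *\<^sub>R F x))\<^sup>2) = (\<lambda>x. indicator U x *\<^sub>R (norm (F x))\<^sup>2)"
    by (auto simp: fun_eq_iff indicator_def)
  ultimately have "set_borel_measurable lebesgue U (\<lambda>x. (norm (F x))\<^sup>2)"
    unfolding set_borel_measurable_def by simp
  then have Fi: "set_integrable lebesgue U (\<lambda>x. (norm (F x))\<^sup>2)"
    by (rule set_integrable_bound[OF gi]) (auto intro!: AE_I2 sq_le)
  then show "L2 U F" using F by (simp add: L2_def)
  have "set_lebesgue_integral lebesgue U (\<lambda>x. (norm (F x))\<^sup>2)
      \<le> set_lebesgue_integral lebesgue U (\<lambda>x. (g x)\<^sup>2)"
    using Fi gi sq_le by (intro set_integral_mono) auto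
  then show "L2norm U F \<le> L2norm U g"
    by (simp add: L2norm_def)
qed

lemma L2_one:
  assumes "U \<in> sets lebesgue" "emeasure lebesgue U < \<infinity>"
  shows "L2 U (\<lambda>x::'n::euclidean_space. 1::real)"
    and "L2norm U (\<lambda>x::'n. 1::real) = sqrt (measure lebesgue U)"
proof -
  have "integrable lebesgue (indicator U :: 'n \<Rightarrow> real)"
    by (rule integrable_real_indicator[OF assms])
  then show "L2 U (\<lambda>x::'n. 1::real)"
    unfolding L2_def set_borel_measurable_def set_integrable_def
    using assms(1) by (simp add: borel_measurable_indicator)
  show "L2norm U (\<lambda>x::'n. 1::real) = sqrt (measure lebesgue U)"
    unfolding L2norm_def set_lebesgue_integral_def by (simp add: integral_indicator)
qed

lemma L2norm_one_plus_abs_le: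
  fixes u :: "'n::euclidean_space \<Rightarrow> real"
  assumes U: "U \<in> sets lebesgue" "emeasure lebesgue U < \<infinity>" and u: "L2 U u"
  shows "L2 U (\<lambda>x. 1 + \<bar>u x\<bar>)"
    and "L2norm U (\<lambda>x. 1 + \<bar>u x\<bar>) \<le> sqrt (measure lebesgue U) + L2norm U u"
proof -
  note one = L2_one[OF U]
  have ui: "set_integrable lebesgue U (\<lambda>x. (u x)\<^sup>2)" using u by (simp add: L2_def)
  have oi: "set_integrable lebesgue U (\<lambda>x::'n. 1::real)" using one(1) by (simp add: L2_def)
  have ai: "set_integrable lebesgue U (\<lambda>x. \<bar>u x\<bar>)"
    using set_integrable_abs[OF L2_Cauchy_Schwarz(1)[OF one(1) u]] by simp
  have "(1 + \<bar>u x\<bar>)\<^sup>2 = 1 + 2 * \<bar>u x\<bar> + (u x)\<^sup>2" for x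
    by (simp add: power2_eq_square algebra_simps)
  then have expand: "(\<lambda>x. (1 + \<bar>u x\<bar>)\<^sup>2) = (\<lambda>x. 1 + 2 * \<bar>u x\<bar> + (u x)\<^sup>2)"
    by (simp add: fun_eq_iff)
  have ei: "set_integrable lebesgue U (\<lambda>x. 1 + 2 * \<bar>u x\<bar> + (u x)\<^sup>2)"
    using oi ai ui by (intro set_integral_add(1) set_integrable_mult_right)
  have m: "set_borel_measurable lebesgue U (\<lambda>x. 1 + \<bar>u x\<bar>)"
    using ai one(1) u unfolding L2_def set_borel_measurable_def set_integrable_def
    by (auto simp: distrib_left intro!: borel_measurable_add borel_measurable_integrable)
  show "L2 U (\<lambda>x. 1 + \<bar>u x\<bar>)"
    using m ei by (simp add: L2_def expand)
  have "(L2norm U (\<lambda>x. 1 + \<bar>u x\<bar>))\<^sup>2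
      = measure lebesgue U + 2 * set_lebesgue_integral lebesgue U (\<lambda>x. \<bar>u x\<bar>) + (L2norm U u)\<^sup>2"
  proof -
    have "set_lebesgue_integral lebesgue U (\<lambda>x::'n. 1::real) = measure lebesgue U"
      unfolding set_lebesgue_integral_def by (simp add: integral_indicator)
    then show ?thesis
      using oi ai ui
      by (simp add: power2_L2norm expand set_integral_add set_integrable_mult_right set_integral_mult_right)
  qed
  also have "\<dots> \<le> measure lebesgue U + 2 * (sqrt (measure lebesgue U) * L2norm U u) + (L2norm U u)\<^sup>2"
    using L2_Cauchy_Schwarz(2)[OF one(1) u] one(2) by simp
  also have "\<dots> = (sqrt (measure lebesgue U) + L2norm U u)\<^sup>2"
    by (simp add: power2_eq_square algebra_simps)
  finally show "L2norm U (\<lambda>x. 1 + \<bar>u x\<bar>) \<le> sqrt (measure lebesgue U) + L2norm U u"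
    by (rule power2_le_imp_le) (simp add: L2norm_nonneg)
qed

lemma L2_mult:
  fixes g :: "'n::euclidean_space \<Rightarrow> real"
  assumes "L2 U g"
  shows "L2 U (\<lambda>x. c * g x)"
proof -
  have "(\<lambda>x. c * (indicator U x *\<^sub>R g x)) \<in> borel_measurable lebesgue"
    using assms unfolding L2_def set_borel_measurable_def by (intro borel_measurable_times) auto
  moreover have "(\<lambda>x. c * (indicator U x *\<^sub>R g x)) = (\<lambda>x. indicator U x *\<^sub>R (c * g x))"
    by (simp add: fun_eq_iff)
  moreover have "set_integrable lebesgue U (\<lambda>x. c\<^sup>2 * (g x)\<^sup>2)"
    using assms unfolding L2_def by (intro set_integrable_mult_right) simp
  ultimately show ?thesis
    by (simp add: L2_def set_borel_measurable_def power_mult_distrib)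
qed

lemma L2norm_superposition_le:
  fixes u :: "'n::euclidean_space \<Rightarrow> real"
  assumes U: "U \<in> sets lebesgue" "emeasure lebesgue U < \<infinity>" and u: "L2 U u"
    and \<beta>: "continuous_on UNIV \<beta>" "\<beta> 0 = 0" "\<And>s. \<bar>\<beta> s\<bar> \<le> M * (1 + \<bar>s\<bar>)"
  shows "L2norm U (\<lambda>x. \<beta> (u x)) \<le> M * (sqrt (measure lebesgue U) + L2norm U u)"
proof -
  have M: "M \<ge> 0" using \<beta>(3)[of 0] \<beta>(2) by simp
  note one_plus = L2norm_one_plus_abs_le[OF U u]
  have "(\<lambda>x. indicator U x *\<^sub>R u x) \<in> borel_measurable lebesgue"
    using u by (simp add: L2_def set_borel_measurable_def)
  then have "(\<lambda>x. \<beta> (indicator U x *\<^sub>R u x)) \<in> borel_measurable lebesgue"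
    using measurable_compose borel_measurable_continuous_onI[OF \<beta>(1)] by blast
  moreover have "(\<lambda>x. \<beta> (indicator U x *\<^sub>R u x)) = (\<lambda>x. indicator U x *\<^sub>R \<beta> (u x))"
    using \<beta>(2) by (auto simp: fun_eq_iff indicator_def)
  ultimately have m: "set_borel_measurable lebesgue U (\<lambda>x. \<beta> (u x))"
    unfolding set_borel_measurable_def by simp
  have "L2norm U (\<lambda>x. \<beta> (u x)) \<le> L2norm U (\<lambda>x. M * (1 + \<bar>u x\<bar>))"
    by (rule L2_mono(2)[OF m L2_mult[OF one_plus(1)]]) (simp add: \<beta>(3))
  also have "\<dots> \<le> M * (sqrt (measure lebesgue U) + L2norm U u)"
    using one_plus(2) M by (simp add: L2norm_mult mult_left_mono)
  finally show ?thesis .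
qed

lemma loc_integrable_set_borel_measurable:
  fixes G :: "'n::euclidean_space \<Rightarrow> 'm::euclidean_space"
  assumes "open U" "loc_integrable U G"
  shows "set_borel_measurable lebesgue U G"
proof -
  obtain K where K: "\<And>n. compact (K n)" "\<And>n. K n \<subseteq> U"
    and "\<And>n. K n \<subseteq> interior (K (Suc n))" "\<Union> (range K) = U"
    and exhaust: "\<And>C. compact C \<Longrightarrow> C \<subseteq> U \<Longrightarrow> \<exists>N. \<forall>n\<ge>N. C \<subseteq> K n"
    by (fact open_Union_compact_subsets[OF assms(1)])
  have "(\<lambda>x. indicator (K n) x *\<^sub>R G x) \<in> borel_measurable lebesgue" for n
    using assms(2) K unfolding loc_integrable_def set_integrable_def
    by (blast intro: borel_measurable_integrable)
  moreover have "(\<lambda>n. indicator (K n) x *\<^sub>R G x) \<longlonglongrightarrow> indicator U x *\<^sub>R G x" for x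
  proof (cases "x \<in> U")
    case True
    then obtain N where "\<forall>n\<ge>N. {x} \<subseteq> K n" using exhaust[of "{x}"] by auto
    then have "\<forall>\<^sub>F n in sequentially. indicator (K n) x *\<^sub>R G x = indicator U x *\<^sub>R G x"
      using True unfolding eventually_sequentially by (intro exI[of _ N]) auto
    then show ?thesis by (rule tendsto_eventually)
  next
    case False
    then have "x \<notin> K n" for n using K(2) by auto
    then show ?thesis using False by simp
  qed
  ultimately show ?thesis
    unfolding set_borel_measurable_def by (rule borel_measurable_LIMSEQ_metric)
qed
lemma set_borel_measurable_wgrad:
  assumes "open U" "H01 U u"
  shows "set_borel_measurable lebesgue U (wgrad U u)"
proof -
  have "\<exists>G. is_weak_grad U u G" using assms(2) by (auto simp: H01_def)
  then have "is_weak_grad U u (wgrad U u)" unfolding wgrad_def by (rule someI_ex)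
  then show ?thesis
    using assms(1) by (intro loc_integrable_set_borel_measurable) (auto simp: is_weak_grad_def)
qed

lemma set_borel_measurable_wgrad2:
  assumes "open (\<omega>1 \<times> \<omega>2)" "H01_X2 \<omega>1 \<omega>2 u"
  shows "set_borel_measurable lebesgue (\<omega>1 \<times> \<omega>2) (wgrad2 (\<omega>1 \<times> \<omega>2) u)"
proof -
  have "\<exists>G. is_weak_grad2 (\<omega>1 \<times> \<omega>2) u G" using assms(2) by (auto simp: H01_X2_def)
  then have "is_weak_grad2 (\<omega>1 \<times> \<omega>2) u (wgrad2 (\<omega>1 \<times> \<omega>2) u)"
    unfolding wgrad2_def by (rule someI_ex)
  then show ?thesis
    using assms(1) by (intro loc_integrable_set_borel_measurable) (auto simp: is_weak_grad2_def)
qed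

section \<open>Elliptic coefficient fields\<close>

definition elliptic_field :: "'n::euclidean_space set \<Rightarrow> ('n \<Rightarrow> 'v::euclidean_space \<Rightarrow> 'v) \<Rightarrow> real \<Rightarrow> bool"
  where "elliptic_field U B \<mu> \<longleftrightarrow>
    (\<forall>x. linear (B x)) \<and> (\<forall>\<xi>. (\<lambda>x. B x \<xi>) \<in> borel_measurable lebesgue) \<and>
    (\<exists>K. AE x in lebesgue. x \<in> U \<longrightarrow> (\<forall>\<xi>. norm (B x \<xi>) \<le> K * norm \<xi>)) \<and>
    (AE x in lebesgue. x \<in> U \<longrightarrow> (\<forall>\<xi>. \<mu> * (norm \<xi>)\<^sup>2 \<le> B x \<xi> \<bullet> \<xi>))"

lemma borel_measurable_linear_apply:
  fixes B :: "'x \<Rightarrow> 'w::euclidean_space \<Rightarrow> 'u::euclidean_space"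
  assumes "\<And>x. linear (B x)" "\<And>\<xi>. (\<lambda>x. B x \<xi>) \<in> borel_measurable M" "F \<in> borel_measurable M"
  shows "(\<lambda>x. B x (F x)) \<in> borel_measurable M"
proof -
  have "B x (F x) = (\<Sum>b\<in>Basis. (F x \<bullet> b) *\<^sub>R B x b)" for x
  proof -
    have "B x (F x) = B x (\<Sum>b\<in>Basis. (F x \<bullet> b) *\<^sub>R b)" by (simp add: euclidean_representation)
    also have "\<dots> = (\<Sum>b\<in>Basis. (F x \<bullet> b) *\<^sub>R B x b)"
      using assms(1)[of x] by (simp add: linear_sum linear_cmul)
    finally show ?thesis .
  qed
  moreover have "(\<lambda>x. \<Sum>b\<in>Basis. (F x \<bullet> b) *\<^sub>R B x b) \<in> borel_measurable M"
    by (intro borel_measurable_sum borel_measurable_scaleR borel_measurable_inner assms(2,3)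
        borel_measurable_const)
  ultimately show ?thesis by simp
qed

lemma set_integrable_elliptic_form:
  fixes G :: "'n::euclidean_space \<Rightarrow> 'v::euclidean_space"
  assumes B: "elliptic_field U B \<mu>" and G: "set_borel_measurable lebesgue U G"
    and G2: "set_integrable lebesgue U (\<lambda>x. (norm (G x))\<^sup>2)"
  shows "set_integrable lebesgue U (\<lambda>x. B x (G x) \<bullet> G x)"
proof -
  have lin: "\<And>x. linear (B x)" and meas: "\<And>\<xi>. (\<lambda>x. B x \<xi>) \<in> borel_measurable lebesgue"
    using B by (auto simp: elliptic_field_def)
  obtain K where K: "AE x in lebesgue. x \<in> U \<longrightarrow> (\<forall>\<xi>. norm (B x \<xi>) \<le> K * norm \<xi>)"
    using B by (auto simp: elliptic_field_def)
  define G' where "G' x = indicator U x *\<^sub>R G x" for x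
  have G': "G' \<in> borel_measurable lebesgue"
    using G unfolding set_borel_measurable_def G'_def[abs_def] .
  have "(\<lambda>x. B x (G' x) \<bullet> G' x) \<in> borel_measurable lebesgue"
    by (intro borel_measurable_inner borel_measurable_linear_apply[OF lin meas G'] G')
  moreover have "(\<lambda>x. B x (G' x) \<bullet> G' x) = (\<lambda>x. indicator U x *\<^sub>R (B x (G x) \<bullet> G x))"
    using lin by (auto simp: fun_eq_iff G'_def indicator_def linear_0)
  ultimately have m: "set_borel_measurable lebesgue U (\<lambda>x. B x (G x) \<bullet> G x)"
    unfolding set_borel_measurable_def by simp
  show ?thesis
  proof (rule set_integrable_bound[OF set_integrable_mult_right[OF G2, of "\<bar>K\<bar>"] m])
    show "AE x\<in>U in lebesgue. norm (B x (G x) \<bullet> G x) \<le> norm (\<bar>K\<bar> * (norm (G x))\<^sup>2)"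
      using K
    proof eventually_elim
      case (elim x)
      show ?case
      proof
        assume "x \<in> U"
        then have "norm (B x (G x)) \<le> K * norm (G x)" using elim by blast
        also have "\<dots> \<le> \<bar>K\<bar> * norm (G x)" by (rule mult_right_mono) auto
        finally have BG: "norm (B x (G x)) \<le> \<bar>K\<bar> * norm (G x)" .
        have "norm (B x (G x) \<bullet> G x) \<le> norm (B x (G x)) * norm (G x)"
          by (simp add: Cauchy_Schwarz_ineq2)
        also have "\<dots> \<le> \<bar>K\<bar> * norm (G x) * norm (G x)"
          by (rule mult_right_mono[OF BG]) simp
        also have "\<dots> = norm (\<bar>K\<bar> * (norm (G x))\<^sup>2)"
          by (simp add: power2_eq_square abs_mult)
        finally show "norm (B x (G x) \<bullet> G x) \<le> norm (\<bar>K\<bar> * (norm (G x))\<^sup>2)" .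
      qed
    qed
  qed
qed

lemma mono_mult_self_nonneg:
  fixes \<beta> :: "real \<Rightarrow> real"
  assumes "mono \<beta>" "\<beta> 0 = 0"
  shows "0 \<le> \<beta> s * s"
proof (cases "0 \<le> s")
  case True
  then have "0 \<le> \<beta> s" using assms by (metis monoD)
  then show ?thesis using True by simp
next
  case False
  then have "\<beta> s \<le> 0" using assms by (metis monoD linear)
  then show ?thesis using False by (simp add: mult_nonpos_nonpos)
qed

lemma elliptic_energy_estimate:
  fixes u f :: "'n::euclidean_space \<Rightarrow> real" and G :: "'n \<Rightarrow> 'v::euclidean_space"
  assumes B: "elliptic_field U B \<mu>" and \<mu>: "\<mu> > 0"
    and u: "L2 U u" and f: "L2 U f" and G: "set_borel_measurable lebesgue U G"
    and \<beta>: "mono \<beta>" "\<beta> 0 = 0"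
    and C: "C \<ge> 0" and poincare: "L2norm U u \<le> C * L2norm U G"
    and energy: "set_lebesgue_integral lebesgue U (\<lambda>x. \<beta> (u x) * u x)
        + set_lebesgue_integral lebesgue U (\<lambda>x. B x (G x) \<bullet> G x)
        = set_lebesgue_integral lebesgue U (\<lambda>x. f x * u x)"
  shows "L2norm U G \<le> C * L2norm U f / \<mu>"
proof (cases "set_integrable lebesgue U (\<lambda>x. (norm (G x))\<^sup>2)")
  case False
  then show ?thesis
    using C \<mu> by (simp add: L2norm_eq_0_if_not_set_integrable L2norm_nonneg)
next
  case True
  have \<beta>u: "0 \<le> set_lebesgue_integral lebesgue U (\<lambda>x. \<beta> (u x) * u x)"
    unfolding set_lebesgue_integral_def
    by (intro integral_nonneg_AE AE_I2) (simp add: mono_mult_self_nonneg[OF \<beta>])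
  have "AE x in lebesgue. x \<in> U \<longrightarrow> (\<forall>\<xi>. \<mu> * (norm \<xi>)\<^sup>2 \<le> B x \<xi> \<bullet> \<xi>)"
    using B by (simp add: elliptic_field_def)
  then have ell: "AE x\<in>U in lebesgue. \<mu> * (norm (G x))\<^sup>2 \<le> B x (G x) \<bullet> G x"
    by eventually_elim blast
  have "\<mu> * (L2norm U G)\<^sup>2 = set_lebesgue_integral lebesgue U (\<lambda>x. \<mu> * (norm (G x))\<^sup>2)"
    by (simp add: power2_L2norm set_integral_mult_right)
  also have "\<dots> \<le> set_lebesgue_integral lebesgue U (\<lambda>x. B x (G x) \<bullet> G x)"
    by (rule set_integral_mono_AE[OF set_integrable_mult_right[OF True]
          set_integrable_elliptic_form[OF B G True] ell])
  also have "\<dots> \<le> set_lebesgue_integral lebesgue U (\<lambda>x. f x * u x)"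
    using energy \<beta>u by linarith
  also have "\<dots> \<le> L2norm U f * L2norm U u"
    by (rule L2_Cauchy_Schwarz(3)[OF f u])
  also have "\<dots> \<le> L2norm U f * (C * L2norm U G)"
    by (rule mult_left_mono[OF poincare L2norm_nonneg])
  finally have main: "(\<mu> * L2norm U G) * L2norm U G \<le> (C * L2norm U f) * L2norm U G"
    by (simp add: power2_eq_square algebra_simps)
  have "\<mu> * L2norm U G \<le> C * L2norm U f"
  proof (cases "L2norm U G = 0")
    case True
    then show ?thesis using C by (simp add: L2norm_nonneg)
  next
    case False
    then have "L2norm U G > 0" using L2norm_nonneg[of U G] by linarith
    with main show ?thesis by (rule mult_right_le_imp_le)
  qed
  then show ?thesis
    using \<mu> by (simp add: field_simps)
qed

lemma elliptic_fieldI_onorm: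
  assumes "\<And>x. linear (A x)" "\<And>\<xi>. (\<lambda>x. A x \<xi>) \<in> borel_measurable lebesgue"
    and "\<exists>K. AE x in lebesgue. x \<in> U \<longrightarrow> onorm (A x) \<le> K"
    and "AE x in lebesgue. x \<in> U \<longrightarrow> (\<forall>\<xi>. A x \<xi> \<bullet> \<xi> \<ge> \<mu> * (norm \<xi>)\<^sup>2)"
  shows "elliptic_field U A \<mu>"
proof -
  obtain K where K: "AE x in lebesgue. x \<in> U \<longrightarrow> onorm (A x) \<le> K" using assms(3) by blast
  have "AE x in lebesgue. x \<in> U \<longrightarrow> (\<forall>\<xi>. norm (A x \<xi>) \<le> K * norm \<xi>)"
    using K
  proof eventually_elim
    case (elim x)
    have bl: "bounded_linear (A x)" using assms(1) linear_conv_bounded_linear by blast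
    show ?case
    proof (intro impI allI)
      fix \<xi> assume "x \<in> U"
      have "norm (A x \<xi>) \<le> onorm (A x) * norm \<xi>" by (rule onorm[OF bl])
      also have "\<dots> \<le> K * norm \<xi>" using elim \<open>x \<in> U\<close> by (intro mult_right_mono) auto
      finally show "norm (A x \<xi>) \<le> K * norm \<xi>" .
    qed
  qed
  then show ?thesis
    using assms unfolding elliptic_field_def by blast
qed

lemma Dscale_inner: "Dscale \<epsilon> a \<bullet> b = a \<bullet> Dscale \<epsilon> b"
  by (cases a, cases b) (simp add: Dscale_def inner_Pair)

lemma linear_Dscale: "linear (Dscale \<epsilon>)"
  by (rule linearI) (auto simp: Dscale_def algebra_simps)

lemma norm_Dscale_le:
  assumes "0 \<le> \<epsilon>" "\<epsilon> \<le> 1"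
  shows "norm (Dscale \<epsilon> \<xi>) \<le> norm \<xi>"
proof -
  obtain a b where \<xi>: "\<xi> = (a, b)" by fastforce
  have "\<epsilon>\<^sup>2 * (norm a)\<^sup>2 \<le> (norm a)\<^sup>2"
    using assms by (intro mult_left_le_one_le) (auto intro: power_le_one)
  then show ?thesis
    by (simp add: \<xi> Dscale_def norm_Pair power_mult_distrib)
qed

lemma power2_norm_Dscale_ge:
  assumes "0 \<le> \<epsilon>" "\<epsilon> \<le> 1"
  shows "\<epsilon>\<^sup>2 * (norm \<xi>)\<^sup>2 \<le> (norm (Dscale \<epsilon> \<xi>))\<^sup>2"
proof -
  obtain a b where \<xi>: "\<xi> = (a, b)" by fastforce
  have "\<epsilon>\<^sup>2 * (norm b)\<^sup>2 \<le> (norm b)\<^sup>2"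
    using assms by (intro mult_left_le_one_le) (auto intro: power_le_one)
  then show ?thesis
    by (simp add: \<xi> Dscale_def norm_Pair power_mult_distrib algebra_simps)
qed

lemma elliptic_field_pointwise_transform:
  fixes A :: "'n::euclidean_space \<Rightarrow> 'v::euclidean_space \<Rightarrow> 'v"
    and B :: "'n \<Rightarrow> 'w::euclidean_space \<Rightarrow> 'w"
  assumes A: "elliptic_field U A \<mu>"
    and lin: "\<And>x. linear (B x)" and meas: "\<And>\<eta>. (\<lambda>x. B x \<eta>) \<in> borel_measurable lebesgue"
    and bound: "\<And>x K \<eta>. (\<And>\<xi>. norm (A x \<xi>) \<le> K * norm \<xi>) \<Longrightarrow> norm (B x \<eta>) \<le> max K 0 * norm \<eta>"
    and ell: "\<And>x \<eta>. (\<And>\<xi>. \<mu> * (norm \<xi>)\<^sup>2 \<le> A x \<xi> \<bullet> \<xi>) \<Longrightarrow> \<nu> * (norm \<eta>)\<^sup>2 \<le> B x \<eta> \<bullet> \<eta>"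
  shows "elliptic_field U B \<nu>"
proof -
  obtain K where "AE x in lebesgue. x \<in> U \<longrightarrow> (\<forall>\<xi>. norm (A x \<xi>) \<le> K * norm \<xi>)"
    using A by (auto simp: elliptic_field_def)
  then have "AE x in lebesgue. x \<in> U \<longrightarrow> (\<forall>\<eta>. norm (B x \<eta>) \<le> max K 0 * norm \<eta>)"
    by eventually_elim (auto intro: bound)
  moreover have "AE x in lebesgue. x \<in> U \<longrightarrow> (\<forall>\<xi>. \<mu> * (norm \<xi>)\<^sup>2 \<le> A x \<xi> \<bullet> \<xi>)"
    using A by (simp add: elliptic_field_def)
  then have "AE x in lebesgue. x \<in> U \<longrightarrow> (\<forall>\<eta>. \<nu> * (norm \<eta>)\<^sup>2 \<le> B x \<eta> \<bullet> \<eta>)"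
    by eventually_elim (auto intro: ell)
  ultimately show ?thesis
    using lin meas unfolding elliptic_field_def by blast
qed

lemma elliptic_field_A_eps:
  fixes A :: "'a::euclidean_space \<times> 'b::euclidean_space \<Rightarrow> 'a \<times> 'b \<Rightarrow> 'a \<times> 'b"
  assumes A: "elliptic_field U A lam" and lam: "lam \<ge> 0" and \<epsilon>: "0 < \<epsilon>" "\<epsilon> \<le> 1"
  shows "elliptic_field U (A_eps \<epsilon> A) (lam * \<epsilon>\<^sup>2)"
proof (rule elliptic_field_pointwise_transform[OF A])
  have lin: "\<And>x. linear (A x)" and meas: "\<And>\<xi>. (\<lambda>x. A x \<xi>) \<in> borel_measurable lebesgue"
    using A by (auto simp: elliptic_field_def)
  have "A_eps \<epsilon> A x = Dscale \<epsilon> \<circ> A x \<circ> Dscale \<epsilon>" for x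
    by (simp add: fun_eq_iff A_eps_def)
  moreover have "linear (Dscale \<epsilon> \<circ> A x \<circ> Dscale \<epsilon>)" for x
    by (intro linear_compose linear_Dscale lin)
  ultimately show "linear (A_eps \<epsilon> A x)" for x by simp
  have "continuous_on UNIV (Dscale \<epsilon> :: 'a \<times> 'b \<Rightarrow> 'a \<times> 'b)"
    using linear_Dscale[of \<epsilon>] unfolding linear_conv_bounded_linear by (rule linear_continuous_on)
  then show "(\<lambda>x. A_eps \<epsilon> A x \<eta>) \<in> borel_measurable lebesgue" for \<eta>
    using measurable_compose[OF meas[of "Dscale \<epsilon> \<eta>"] borel_measurable_continuous_onI]
    by (simp add: A_eps_def o_def)
next
  fix x K and \<eta> :: "'a \<times> 'b"
  assume K: "\<And>\<xi>. norm (A x \<xi>) \<le> K * norm \<xi>"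
  have "norm (A_eps \<epsilon> A x \<eta>) \<le> norm (A x (Dscale \<epsilon> \<eta>))"
    unfolding A_eps_def using \<epsilon> by (intro norm_Dscale_le) auto
  also have "\<dots> \<le> max K 0 * norm (Dscale \<epsilon> \<eta>)"
    by (rule order_trans[OF K mult_right_mono[OF max.cobounded1 norm_ge_zero]])
  also have "\<dots> \<le> max K 0 * norm \<eta>"
    using \<epsilon> by (intro mult_left_mono norm_Dscale_le) auto
  finally show "norm (A_eps \<epsilon> A x \<eta>) \<le> max K 0 * norm \<eta>" .
next
  fix x and \<eta> :: "'a \<times> 'b"
  assume ell: "\<And>\<xi>. lam * (norm \<xi>)\<^sup>2 \<le> A x \<xi> \<bullet> \<xi>"
  have "lam * \<epsilon>\<^sup>2 * (norm \<eta>)\<^sup>2 \<le> lam * (norm (Dscale \<epsilon> \<eta>))\<^sup>2"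
    using power2_norm_Dscale_ge[of \<epsilon> \<eta>] \<epsilon> lam by (simp add: mult.assoc mult_left_mono)
  also have "\<dots> \<le> A_eps \<epsilon> A x \<eta> \<bullet> \<eta>"
    using ell[of "Dscale \<epsilon> \<eta>"] by (simp add: A_eps_def Dscale_inner)
  finally show "lam * \<epsilon>\<^sup>2 * (norm \<eta>)\<^sup>2 \<le> A_eps \<epsilon> A x \<eta> \<bullet> \<eta>" .
qed

lemma elliptic_field_A22:
  fixes A :: "'a::euclidean_space \<times> 'b::euclidean_space \<Rightarrow> 'a \<times> 'b \<Rightarrow> 'a \<times> 'b"
  assumes A: "elliptic_field U A lam"
  shows "elliptic_field U (A22 A) lam"
proof (rule elliptic_field_pointwise_transform[OF A])
  have lin: "\<And>x. linear (A x)" and meas: "\<And>\<xi>. (\<lambda>x. A x \<xi>) \<in> borel_measurable lebesgue"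
    using A by (auto simp: elliptic_field_def)
  have "A22 A x = snd \<circ> A x \<circ> Pair 0" for x
    by (simp add: fun_eq_iff A22_def)
  moreover have "linear (snd \<circ> A x \<circ> Pair (0::'a))" for x
    by (intro linear_compose linear_snd lin) (rule linearI; simp)
  ultimately show "linear (A22 A x)" for x by simp
  show "(\<lambda>x. A22 A x \<eta>) \<in> borel_measurable lebesgue" for \<eta>
    using measurable_compose[OF meas[of "(0, \<eta>)"]
        borel_measurable_continuous_onI[OF continuous_on_snd[OF continuous_on_id]]]
    by (simp add: A22_def o_def)
next
  fix x K and \<eta> :: 'b
  assume K: "\<And>\<xi>. norm (A x \<xi>) \<le> K * norm \<xi>"
  have "norm (A22 A x \<eta>) \<le> norm (A x (0, \<eta>))"
    unfolding A22_def by (metis norm_snd_le prod.collapse)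
  also have "\<dots> \<le> max K 0 * norm (0::'a, \<eta>)"
    by (rule order_trans[OF K mult_right_mono[OF max.cobounded1 norm_ge_zero]])
  finally show "norm (A22 A x \<eta>) \<le> max K 0 * norm \<eta>"
    by (simp add: norm_Pair)
next
  fix x and \<eta> :: 'b
  assume "\<And>\<xi>. lam * (norm \<xi>)\<^sup>2 \<le> A x \<xi> \<bullet> \<xi>"
  from this[of "(0, \<eta>)"] show "lam * (norm \<eta>)\<^sup>2 \<le> A22 A x \<eta> \<bullet> \<eta>"
    by (simp add: A22_def inner_Pair_0 norm_Pair)
qed
section \<open>Estimates for the solutions\<close>

lemma open_bounded_lebesgue_finite:
  assumes "open U" "bounded U"
  shows "U \<in> sets lebesgue" "emeasure lebesgue U < \<infinity>"
  using lmeasurable_open[OF assms(2,1)] unfolding fmeasurable_def by blast+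

lemma sol_eps_estimates:
  fixes \<omega>1 :: "'a::euclidean_space set" and \<omega>2 :: "'b::euclidean_space set"
    and A :: "'a \<times> 'b \<Rightarrow> 'a \<times> 'b \<Rightarrow> 'a \<times> 'b"
  assumes \<Omega>: "open (\<omega>1 \<times> \<omega>2)" "bounded (\<omega>1 \<times> \<omega>2)"
    and f: "L2 (\<omega>1 \<times> \<omega>2) f" and A: "elliptic_field (\<omega>1 \<times> \<omega>2) A lam" and lam: "lam > 0"
    and \<beta>: "continuous_on UNIV \<beta>" "mono \<beta>" "\<beta> 0 = 0" "\<And>s. \<bar>\<beta> s\<bar> \<le> M * (1 + \<bar>s\<bar>)"
    and \<epsilon>: "0 < \<epsilon>" "\<epsilon> \<le> 1"
    and C: "C \<ge> 0"
    and poincare: "\<And>v. H01 (\<omega>1 \<times> \<omega>2) v \<Longrightarrow>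
      L2norm (\<omega>1 \<times> \<omega>2) v \<le> C * L2norm (\<omega>1 \<times> \<omega>2) (wgrad (\<omega>1 \<times> \<omega>2) v)"
    and W: "W \<subseteq> {v. H01 (\<omega>1 \<times> \<omega>2) v}"
    and u: "sol_eps \<omega>1 \<omega>2 \<beta> A \<epsilon> W f u"
  shows "L2norm (\<omega>1 \<times> \<omega>2) (wgrad (\<omega>1 \<times> \<omega>2) u) \<le> C * L2norm (\<omega>1 \<times> \<omega>2) f / (lam * \<epsilon>\<^sup>2)"
    and "L2norm (\<omega>1 \<times> \<omega>2) (\<lambda>x. \<beta> (u x)) \<le> M / \<epsilon>\<^sup>2 *
      (sqrt (measure lebesgue (\<omega>1 \<times> \<omega>2)) + C\<^sup>2 * L2norm (\<omega>1 \<times> \<omega>2) f / lam)"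
proof -
  let ?U = "\<omega>1 \<times> \<omega>2"
  let ?G = "wgrad ?U u"
  have H: "H01 ?U u" using u W by (auto simp: sol_eps_def)
  then have uL2: "L2 ?U u" by (simp add: H01_def)
  have energy: "set_lebesgue_integral lebesgue ?U (\<lambda>x. \<beta> (u x) * u x)
      + set_lebesgue_integral lebesgue ?U (\<lambda>x. A_eps \<epsilon> A x (?G x) \<bullet> ?G x)
      = set_lebesgue_integral lebesgue ?U (\<lambda>x. f x * u x)"
    using u by (simp add: sol_eps_def)
  have \<epsilon>2: "0 < \<epsilon>\<^sup>2" "\<epsilon>\<^sup>2 \<le> 1" using \<epsilon> by (auto intro: power_le_one)
  have A\<epsilon>: "elliptic_field ?U (A_eps \<epsilon> A) (lam * \<epsilon>\<^sup>2)"
    using lam by (intro elliptic_field_A_eps[OF A _ \<epsilon>]) simp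
  have "lam * \<epsilon>\<^sup>2 > 0" using lam \<epsilon>2 by simp
  then show grad: "L2norm ?U ?G \<le> C * L2norm ?U f / (lam * \<epsilon>\<^sup>2)"
    by (rule elliptic_energy_estimate[OF A\<epsilon> _ uL2 f set_borel_measurable_wgrad[OF \<Omega>(1) H] \<beta>(2,3) C
          poincare[OF H] energy])
  have M: "M \<ge> 0" using \<beta>(4)[of 0] \<beta>(3) by simp
  have "L2norm ?U u \<le> C * (C * L2norm ?U f / (lam * \<epsilon>\<^sup>2))"
    using poincare[OF H] mult_left_mono[OF grad C] by linarith
  also have "\<dots> = (C\<^sup>2 * L2norm ?U f / lam) / \<epsilon>\<^sup>2"
    by (simp add: power2_eq_square)
  finally have u_le: "L2norm ?U u \<le> (C\<^sup>2 * L2norm ?U f / lam) / \<epsilon>\<^sup>2" .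
  have sqrt_le: "sqrt (measure lebesgue ?U) \<le> sqrt (measure lebesgue ?U) / \<epsilon>\<^sup>2"
    using \<epsilon>2 by (simp add: le_divide_eq mult_right_le_one_le)
  have "L2norm ?U (\<lambda>x. \<beta> (u x)) \<le> M * (sqrt (measure lebesgue ?U) + L2norm ?U u)"
    by (rule L2norm_superposition_le[OF open_bounded_lebesgue_finite[OF \<Omega>] uL2 \<beta>(1,3,4)])
  also have "\<dots> \<le> M * (sqrt (measure lebesgue ?U) / \<epsilon>\<^sup>2 + (C\<^sup>2 * L2norm ?U f / lam) / \<epsilon>\<^sup>2)"
    using M sqrt_le u_le by (intro mult_left_mono add_mono) auto
  also have "\<dots> = M / \<epsilon>\<^sup>2 * (sqrt (measure lebesgue ?U) + C\<^sup>2 * L2norm ?U f / lam)"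
    using lam \<epsilon>2 by (simp add: field_simps)
  finally show "L2norm ?U (\<lambda>x. \<beta> (u x))
      \<le> M / \<epsilon>\<^sup>2 * (sqrt (measure lebesgue ?U) + C\<^sup>2 * L2norm ?U f / lam)" .
qed

lemma sol_lim_estimates:
  fixes \<omega>1 :: "'a::euclidean_space set" and \<omega>2 :: "'b::euclidean_space set"
    and A :: "'a \<times> 'b \<Rightarrow> 'a \<times> 'b \<Rightarrow> 'a \<times> 'b"
  assumes \<Omega>: "open (\<omega>1 \<times> \<omega>2)" "bounded (\<omega>1 \<times> \<omega>2)"
    and f: "L2 (\<omega>1 \<times> \<omega>2) f" and A: "elliptic_field (\<omega>1 \<times> \<omega>2) A lam" and lam: "lam > 0"
    and \<beta>: "continuous_on UNIV \<beta>" "mono \<beta>" "\<beta> 0 = 0" "\<And>s. \<bar>\<beta> s\<bar> \<le> M * (1 + \<bar>s\<bar>)"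
    and C: "C \<ge> 0"
    and poincare: "\<And>v. H01_X2 \<omega>1 \<omega>2 v \<Longrightarrow>
      L2norm (\<omega>1 \<times> \<omega>2) v \<le> C * L2norm (\<omega>1 \<times> \<omega>2) (wgrad2 (\<omega>1 \<times> \<omega>2) v)"
    and W: "W \<subseteq> {v. H01_X2 \<omega>1 \<omega>2 v}"
    and u: "sol_lim \<omega>1 \<omega>2 \<beta> A W f u"
  shows "L2norm (\<omega>1 \<times> \<omega>2) (wgrad2 (\<omega>1 \<times> \<omega>2) u) \<le> C * L2norm (\<omega>1 \<times> \<omega>2) f / lam"
    and "L2norm (\<omega>1 \<times> \<omega>2) (\<lambda>x. \<beta> (u x)) \<le> M *
      (sqrt (measure lebesgue (\<omega>1 \<times> \<omega>2)) + C\<^sup>2 * L2norm (\<omega>1 \<times> \<omega>2) f / lam)"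
proof -
  let ?U = "\<omega>1 \<times> \<omega>2"
  let ?G = "wgrad2 ?U u"
  have H: "H01_X2 \<omega>1 \<omega>2 u" using u W by (auto simp: sol_lim_def)
  then have uL2: "L2 ?U u" by (simp add: H01_X2_def)
  have energy: "set_lebesgue_integral lebesgue ?U (\<lambda>x. \<beta> (u x) * u x)
      + set_lebesgue_integral lebesgue ?U (\<lambda>x. A22 A x (?G x) \<bullet> ?G x)
      = set_lebesgue_integral lebesgue ?U (\<lambda>x. f x * u x)"
    using u by (simp add: sol_lim_def)
  show grad: "L2norm ?U ?G \<le> C * L2norm ?U f / lam"
    by (rule elliptic_energy_estimate[OF elliptic_field_A22[OF A] lam uL2 f
          set_borel_measurable_wgrad2[OF \<Omega>(1) H] \<beta>(2,3) C poincare[OF H] energy])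
  have M: "M \<ge> 0" using \<beta>(4)[of 0] \<beta>(3) by simp
  have "L2norm ?U u \<le> C * (C * L2norm ?U f / lam)"
    using poincare[OF H] mult_left_mono[OF grad C] by linarith
  then have u_le: "L2norm ?U u \<le> C\<^sup>2 * L2norm ?U f / lam"
    by (simp add: power2_eq_square)
  have "L2norm ?U (\<lambda>x. \<beta> (u x)) \<le> M * (sqrt (measure lebesgue ?U) + L2norm ?U u)"
    by (rule L2norm_superposition_le[OF open_bounded_lebesgue_finite[OF \<Omega>] uL2 \<beta>(1,3,4)])
  also have "\<dots> \<le> M * (sqrt (measure lebesgue ?U) + C\<^sup>2 * L2norm ?U f / lam)"
    using M u_le by (intro mult_left_mono add_left_mono)
  finally show "L2norm ?U (\<lambda>x. \<beta> (u x))
      \<le> M * (sqrt (measure lebesgue ?U) + C\<^sup>2 * L2norm ?U f / lam)" .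
qed

lemma nonneg_if_pos_le_mult:
  fixes a b C :: real
  assumes "0 < a" "a \<le> C * b" "0 \<le> b"
  shows "0 \<le> C"
  using assms by (smt (verit) mult_nonpos_nonneg)

theorem lemma3p1:
  fixes \<omega>1 :: "'a::euclidean_space set" and \<omega>2 :: "'b::euclidean_space set"
    and A :: "'a \<times> 'b \<Rightarrow> 'a \<times> 'b \<Rightarrow> 'a \<times> 'b"
    and \<beta> :: "real \<Rightarrow> real" and f :: "'a \<times> 'b \<Rightarrow> real"
    and V :: "('a \<times> 'b \<Rightarrow> real) set"
    and lam M C\<^sub>\<Omega> C\<^sub>\<omega>\<^sub>2 \<epsilon> :: real
    and u_eVf u_ef u_Vf u_f :: "'a \<times> 'b \<Rightarrow> real"
  assumes \<omega>1: "open \<omega>1" "bounded \<omega>1" and \<omega>2: "open \<omega>2" "bounded \<omega>2"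
    and f: "L2 (\<omega>1 \<times> \<omega>2) f"
    and A_lin: "\<And>x. linear (A x)"
    and A_meas: "\<And>\<xi>. (\<lambda>x. A x \<xi>) \<in> borel_measurable lebesgue"
    and A_bdd: "\<exists>K. AE x in lebesgue. x \<in> \<omega>1 \<times> \<omega>2 \<longrightarrow> onorm (A x) \<le> K"
    and lam: "lam > 0"
    and A_ell: "AE x in lebesgue. x \<in> \<omega>1 \<times> \<omega>2 \<longrightarrow> (\<forall>\<xi>. A x \<xi> \<bullet> \<xi> \<ge> lam * (norm \<xi>)\<^sup>2)"
    and \<beta>: "continuous_on UNIV \<beta>" "mono \<beta>" "\<beta> 0 = 0" "\<And>s. \<bar>\<beta> s\<bar> \<le> M * (1 + \<bar>s\<bar>)"
    and V: "admissible_V \<omega>1 \<omega>2 V"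
    and C\<^sub>\<Omega>: "\<And>v. H01 (\<omega>1 \<times> \<omega>2) v \<Longrightarrow>
              L2norm (\<omega>1 \<times> \<omega>2) v \<le> C\<^sub>\<Omega> * L2norm (\<omega>1 \<times> \<omega>2) (wgrad (\<omega>1 \<times> \<omega>2) v)"
    and C\<^sub>\<omega>\<^sub>2: "\<And>v. H01_X2 \<omega>1 \<omega>2 v \<Longrightarrow>
              L2norm (\<omega>1 \<times> \<omega>2) v \<le> C\<^sub>\<omega>\<^sub>2 * L2norm (\<omega>1 \<times> \<omega>2) (wgrad2 (\<omega>1 \<times> \<omega>2) v)"
    and eps: "0 < \<epsilon>" "\<epsilon> \<le> 1"
    and u_eVf: "sol_eps \<omega>1 \<omega>2 \<beta> A \<epsilon> V f u_eVf"
    and u_ef: "sol_eps \<omega>1 \<omega>2 \<beta> A \<epsilon> {u. H01 (\<omega>1 \<times> \<omega>2) u} f u_ef"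
    and u_Vf: "sol_lim \<omega>1 \<omega>2 \<beta> A V f u_Vf"
    and u_f: "sol_lim \<omega>1 \<omega>2 \<beta> A {u. H01_X2 \<omega>1 \<omega>2 u} f u_f"
  shows
    "L2norm (\<omega>1 \<times> \<omega>2) (wgrad (\<omega>1 \<times> \<omega>2) u_eVf) \<le> C\<^sub>\<Omega> * L2norm (\<omega>1 \<times> \<omega>2) f / (lam * \<epsilon>\<^sup>2)
   \<and> L2norm (\<omega>1 \<times> \<omega>2) (wgrad (\<omega>1 \<times> \<omega>2) u_ef) \<le> C\<^sub>\<Omega> * L2norm (\<omega>1 \<times> \<omega>2) f / (lam * \<epsilon>\<^sup>2)
   \<and> L2norm (\<omega>1 \<times> \<omega>2) (wgrad2 (\<omega>1 \<times> \<omega>2) u_Vf) \<le> C\<^sub>\<omega>\<^sub>2 * L2norm (\<omega>1 \<times> \<omega>2) f / lam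
   \<and> L2norm (\<omega>1 \<times> \<omega>2) (wgrad2 (\<omega>1 \<times> \<omega>2) u_f) \<le> C\<^sub>\<omega>\<^sub>2 * L2norm (\<omega>1 \<times> \<omega>2) f / lam
   \<and> L2norm (\<omega>1 \<times> \<omega>2) (\<lambda>x. \<beta> (u_eVf x)) \<le> M / \<epsilon>\<^sup>2 *
        (sqrt (measure lebesgue (\<omega>1 \<times> \<omega>2)) + C\<^sub>\<Omega>\<^sup>2 * L2norm (\<omega>1 \<times> \<omega>2) f / lam)
   \<and> L2norm (\<omega>1 \<times> \<omega>2) (\<lambda>x. \<beta> (u_ef x)) \<le> M / \<epsilon>\<^sup>2 *
        (sqrt (measure lebesgue (\<omega>1 \<times> \<omega>2)) + C\<^sub>\<Omega>\<^sup>2 * L2norm (\<omega>1 \<times> \<omega>2) f / lam)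
   \<and> L2norm (\<omega>1 \<times> \<omega>2) (\<lambda>x. \<beta> (u_Vf x)) \<le> M *
        (sqrt (measure lebesgue (\<omega>1 \<times> \<omega>2)) + C\<^sub>\<omega>\<^sub>2\<^sup>2 * L2norm (\<omega>1 \<times> \<omega>2) f / lam)
   \<and> L2norm (\<omega>1 \<times> \<omega>2) (\<lambda>x. \<beta> (u_f x)) \<le> M *
        (sqrt (measure lebesgue (\<omega>1 \<times> \<omega>2)) + C\<^sub>\<omega>\<^sub>2\<^sup>2 * L2norm (\<omega>1 \<times> \<omega>2) f / lam)"
proof (cases "\<omega>1 \<times> \<omega>2 = {}")
  case True
  have "M \<ge> 0" using \<beta>(4)[of 0] \<beta>(3) by simp
  then show ?thesis by (simp add: True)
next
  case False
  have \<Omega>: "open (\<omega>1 \<times> \<omega>2)" "bounded (\<omega>1 \<times> \<omega>2)"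
    using \<omega>1 \<omega>2 by (simp_all add: open_Times bounded_Times)
  obtain v where v: "H01 (\<omega>1 \<times> \<omega>2) v" "H01_X2 \<omega>1 \<omega>2 v" "L2norm (\<omega>1 \<times> \<omega>2) v > 0"
    using exists_H01_H01_X2_L2norm_pos[OF \<omega>1(1) \<omega>2(1) False] .
  have C\<^sub>\<Omega>_nonneg: "C\<^sub>\<Omega> \<ge> 0"
    using nonneg_if_pos_le_mult[OF v(3) C\<^sub>\<Omega>[OF v(1)] L2norm_nonneg] .
  have C\<^sub>\<omega>\<^sub>2_nonneg: "C\<^sub>\<omega>\<^sub>2 \<ge> 0"
    using nonneg_if_pos_le_mult[OF v(3) C\<^sub>\<omega>\<^sub>2[OF v(2)] L2norm_nonneg] .
  have A: "elliptic_field (\<omega>1 \<times> \<omega>2) A lam"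
    by (rule elliptic_fieldI_onorm[OF A_lin A_meas A_bdd A_ell])
  have V_H01: "V \<subseteq> {v. H01 (\<omega>1 \<times> \<omega>2) v}" and V_H01_X2: "V \<subseteq> {v. H01_X2 \<omega>1 \<omega>2 v}"
    using V by (auto simp: admissible_V_def)
  show ?thesis
    using sol_eps_estimates[OF \<Omega> f A lam \<beta> eps C\<^sub>\<Omega>_nonneg _ V_H01 u_eVf]
      sol_eps_estimates[OF \<Omega> f A lam \<beta> eps C\<^sub>\<Omega>_nonneg _ order_refl u_ef]
      sol_lim_estimates[OF \<Omega> f A lam \<beta> C\<^sub>\<omega>\<^sub>2_nonneg _ V_H01_X2 u_Vf]
      sol_lim_estimates[OF \<Omega> f A lam \<beta> C\<^sub>\<omega>\<^sub>2_nonneg _ order_refl u_f]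
      C\<^sub>\<Omega> C\<^sub>\<omega>\<^sub>2
    by blast
qed

end
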